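(* Let $P$ be an abelian group, let $h\colon P\to\mathbb R$ and $s\in\mathbb R_{>0}$, and assume that for all $L_0,\dots,L_r\in P$ and $m=(m_1,\dots,m_r)\in\mathbb Z^r$ we have, as $|m|\to\infty$, $$h(m_1L_1+\dots+m_rL_r)=O(|m|^s)\quad\text{and}\quad h(L_0+m_1L_1+\dots+m_rL_r)-h(m_1L_1+\dots+m_rL_r)=O(|m|^{s-1}),$$ where $|m|=\sum_i|m_i|$ and the implied constants may depend on $L_0,\dots,L_r$. Then there is a unique function $\hat h\colon P_{\mathbb R}\to\mathbb R$ such that: (i) for every $L\in P$, $\hat h(L)=\limsup_{m\to+\infty}m^{-s}h(mL)$; (ii) $\hat h(tM)=t^s\hat h(M)$ for all $t\in\mathbb R_{\ge0}$ and $M\in P_{\mathbb R}$; (iii) $\hat h$ is continuous on every finite-dimensional real subspace of $P_{\mathbb R}$.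
   Context: $P_{\mathbb R}=P\otimes_{\mathbb Z}\mathbb R$, and the image of $L\in P$ in $P_{\mathbb R}$ is still denoted $L$. *)

theory Defs
  imports "HOL-Analysis.Analysis" "HOL-Library.Liminf_Limsup"
begin

definition zmul :: "int \<Rightarrow> 'a::ab_group_add \<Rightarrow> 'a" where
  "zmul k x = (if 0 \<le> k then (\<Sum>i<nat k. x) else - (\<Sum>i<nat (- k). x))"

text \<open>(V, iota) is the real tensor product P (x)_Z R, i.e. the real vector space
  V together with the canonical additive map iota : P -> V: iota is additive, its
  image spans V, and every additive map P -> R factors through a linear map V -> R.
  (Together with spanning this is equivalent to the full universal property.)\<close>
definition real_tensor :: "('p::ab_group_add \<Rightarrow> 'v::real_vector) \<Rightarrow> bool" where
  "real_tensor \<iota> \<longleftrightarrow>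
     (\<forall>a b. \<iota> (a + b) = \<iota> a + \<iota> b) \<and>
     span (range \<iota>) = UNIV \<and>
     (\<forall>f::'p \<Rightarrow> real. (\<forall>a b. f (a + b) = f a + f b) \<longrightarrow>
        (\<exists>g. linear g \<and> (\<forall>p. g (\<iota> p) = f p)))"

definition fin_dim_continuous :: "('v::real_vector \<Rightarrow> real) \<Rightarrow> bool" where
  "fin_dim_continuous H \<longleftrightarrow>
     (\<forall>(k::nat) (M::nat \<Rightarrow> 'v) (t::nat \<Rightarrow> real) (T::nat \<Rightarrow> nat \<Rightarrow> real).
        (\<forall>i<k. (\<lambda>n. T n i) \<longlonglongrightarrow> t i) \<longrightarrow>
        (\<lambda>n. H (\<Sum>i<k. T n i *\<^sub>R M i)) \<longlonglongrightarrow> H (\<Sum>i<k. t i *\<^sub>R M i))"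

end

(*
  For a finite family L_1, ..., L_r in P and real coefficients c, put
    hhat_L(c) = limsup_{u -> oo} u^(-s) h(floor(u c_1) L_1 + ... + floor(u c_r) L_r).
  The first hypothesis makes this finite; the second says that h changes by O(|m|^(s-1))
  along each unit step of the lattice, so moving the integer point by O(u |c - c'| + r)
  steps changes h by o(u^s) + O(u^s |c - c'|). Hence hhat_L is homogeneous of degree s and
  continuous in c. Shifting c by a rational multiple of an integer relation among the L_i
  moves floor(u c) by a relation plus a bounded amount, so it does not change hhat_L, and by
  continuity neither does a real combination of relations. Because R is an injective
  Z-module (additive maps into R extend from subgroups, by Zorn's lemma), these real
  combinations are exactly the kernel of c |-> sum c_i L_i in P_R; so hhat_L(c) depends
  only on the vector sum c_i L_i, which defines hhat. Uniqueness: (i) and (ii) determine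
  any such function on the points sum (p_i / n) L_i, which are dense in every
  finite-dimensional subspace, and (iii) extends the equality.
*)
theory Submission
  imports Defs "HOL-Analysis.Finite_Function_Topology"
begin

lemma zmul_0_left [simp]: "zmul 0 x = 0"
  by (simp add: zmul_def)

lemma zmul_add_1: "zmul (k + 1) x = zmul k x + x"
proof (cases "k \<ge> 0")
  case True
  then have "nat (k + 1) = Suc (nat k)" by simp
  with True show ?thesis by (simp add: zmul_def add.commute)
next
  case False
  then consider "k = -1" | "k + 1 < 0" by linarith
  then show ?thesis
  proof cases
    case 2
    then have "nat (- k) = Suc (nat (- (k + 1)))" by simp
    with 2 show ?thesis by (simp add: zmul_def)
  qed (simp add: zmul_def)
qed

lemma zmul_diff_1: "zmul (k - 1) x = zmul k x - x"
  using zmul_add_1[of "k - 1" x] by simp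

lemma zmul_1 [simp]: "zmul 1 x = x"
  using zmul_add_1[of 0 x] by simp

lemma zmul_add_left: "zmul (a + b) x = zmul a x + zmul b x"
proof (induction b rule: int_induct[where k=0])
  case (step1 i)
  have "zmul (a + (i + 1)) x = zmul (a + i) x + x"
    using zmul_add_1[of "a + i" x] by (simp add: add.assoc)
  with step1 show ?case by (simp add: zmul_add_1 add.assoc)
next
  case (step2 i)
  have "zmul (a + (i - 1)) x = zmul (a + i) x - x"
    using zmul_diff_1[of "a + i" x] by (simp add: add_diff_eq)
  with step2 show ?case by (simp add: zmul_diff_1 add_diff_eq)
qed simp

lemma zmul_minus_left: "zmul (- a) x = - zmul a x"
  using zmul_add_left[of a "- a" x] by (simp add: minus_unique)

lemma zmul_diff_left: "zmul (a - b) x = zmul a x - zmul b x"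
  using zmul_add_left[of a "- b" x] by (simp add: zmul_minus_left)

lemma zmul_add_right: "zmul a (x + y) = zmul a x + zmul a y"
proof (induction a rule: int_induct[where k=0])
  case (step1 i)
  then show ?case unfolding zmul_add_1 by (simp add: ac_simps)
next
  case (step2 i)
  then show ?case by (simp add: zmul_diff_1)
qed simp

lemma zmul_0_right [simp]: "zmul a 0 = 0"
  using zmul_add_right[of a 0 0] by simp

lemma zmul_zmul: "zmul a (zmul b x) = zmul (a * b) x"
proof (induction a rule: int_induct[where k=0])
  case (step1 i)
  then show ?case by (simp add: zmul_add_1 zmul_add_left distrib_right)
next
  case (step2 i)
  then show ?case by (simp add: zmul_diff_1 zmul_diff_left left_diff_distrib)
qed simp

lemma zmul_sum_right: "zmul a (\<Sum>i\<in>I. f i) = (\<Sum>i\<in>I. zmul a (f i))"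
  by (induction I rule: infinite_finite_induct) (auto simp: zmul_add_right)

lemma additive_zmul:
  fixes g :: "'a::ab_group_add \<Rightarrow> 'b::real_vector"
  assumes "\<And>x y. g (x + y) = g x + g y"
  shows "g (zmul k x) = of_int k *\<^sub>R g x"
proof (induction k rule: int_induct[where k=0])
  case base
  show ?case using assms[of 0 0] by simp
next
  case (step1 i)
  then show ?case by (simp add: zmul_add_1 assms scaleR_add_left)
next
  case (step2 i)
  have "g (zmul i x) = g (zmul (i - 1) x) + g x"
    using assms[of "zmul (i - 1) x" x] by (simp add: zmul_diff_1)
  with step2 show ?case by (simp add: algebra_simps)
qed

section \<open>Extending additive maps\<close>

definition additive_extension_graph ::
    "'p::ab_group_add set \<Rightarrow> ('p \<Rightarrow> 'b::field_char_0) \<Rightarrow> ('p \<times> 'b) set \<Rightarrow> bool" where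
  "additive_extension_graph A f G \<longleftrightarrow>
     (\<forall>x a b. (x, a) \<in> G \<longrightarrow> (x, b) \<in> G \<longrightarrow> a = b) \<and>
     (\<forall>x a y b. (x, a) \<in> G \<longrightarrow> (y, b) \<in> G \<longrightarrow> (x + y, a + b) \<in> G) \<and>
     (\<forall>x a. (x, a) \<in> G \<longrightarrow> (- x, - a) \<in> G) \<and>
     (\<forall>x\<in>A. (x, f x) \<in> G)"

lemma additive_extension_graphD:
  assumes "additive_extension_graph A f G"
  shows "(x, a) \<in> G \<Longrightarrow> (x, b) \<in> G \<Longrightarrow> a = b"
    and "(x, a) \<in> G \<Longrightarrow> (y, b) \<in> G \<Longrightarrow> (x + y, a + b) \<in> G"
    and "(x, a) \<in> G \<Longrightarrow> (- x, - a) \<in> G"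
    and "x \<in> A \<Longrightarrow> (x, f x) \<in> G"
  using assms unfolding additive_extension_graph_def by blast+

lemma additive_extension_graph_zmul:
  assumes G: "additive_extension_graph A f G" and xa: "(x, a) \<in> G"
  shows "(zmul n x, of_int n * a) \<in> G"
proof (induction n rule: int_induct[where k=0])
  case base
  show ?case
    using additive_extension_graphD(2)[OF G xa additive_extension_graphD(3)[OF G xa]] by simp
next
  case (step1 i)
  from additive_extension_graphD(2)[OF G step1(2) xa] show ?case
    unfolding zmul_add_1 by (simp add: distrib_right)
next
  case (step2 i)
  from additive_extension_graphD(2)[OF G step2(2) additive_extension_graphD(3)[OF G xa]]
  show ?case by (simp add: zmul_diff_1 algebra_simps)
qed

lemma additive_extension_graph_Union:
  assumes "C \<noteq> {}" and graphs: "\<And>G. G \<in> C \<Longrightarrow> additive_extension_graph A f G"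
    and chain: "\<And>G H. G \<in> C \<Longrightarrow> H \<in> C \<Longrightarrow> G \<subseteq> H \<or> H \<subseteq> G"
  shows "additive_extension_graph A f (\<Union>C)"
proof -
  have common: "\<exists>K\<in>C. (x, a) \<in> K \<and> (y, b) \<in> K"
    if xa: "(x, a) \<in> \<Union>C" and yb: "(y, b) \<in> \<Union>C" for x a y b
  proof -
    obtain G H where "G \<in> C" "H \<in> C" "(x, a) \<in> G" "(y, b) \<in> H" using xa yb by blast
    then show ?thesis using chain[of G H] by blast
  qed
  show ?thesis
    unfolding additive_extension_graph_def
  proof (intro conjI allI impI ballI)
    fix x a b assume "(x, a) \<in> \<Union>C" "(x, b) \<in> \<Union>C"
    then show "a = b" using common additive_extension_graphD(1)[OF graphs] by metis
  next
    fix x a y b assume "(x, a) \<in> \<Union>C" "(y, b) \<in> \<Union>C"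
    then show "(x + y, a + b) \<in> \<Union>C" using common additive_extension_graphD(2)[OF graphs] by blast
  next
    fix x a assume "(x, a) \<in> \<Union>C"
    then show "(- x, - a) \<in> \<Union>C" using additive_extension_graphD(3)[OF graphs] by blast
  next
    fix x assume "x \<in> A"
    then show "(x, f x) \<in> \<Union>C" using additive_extension_graphD(4)[OF graphs] \<open>C \<noteq> {}\<close> by blast
  qed
qed

lemma additive_extension_graph_slope:
  assumes G: "additive_extension_graph A f G" and G0: "(0, 0) \<in> G"
  obtains c where "\<And>n a. (zmul n x0, a) \<in> G \<Longrightarrow> a = of_int n * c"
proof (cases "\<exists>n a. n \<noteq> 0 \<and> (zmul n x0, a) \<in> G")
  case True
  then obtain n0 a0 where n0: "n0 \<noteq> 0" "(zmul n0 x0, a0) \<in> G" by blast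
  show ?thesis
  proof (rule that[of "a0 / of_int n0"])
    fix n a assume na: "(zmul n x0, a) \<in> G"
    have "zmul n (zmul n0 x0) = zmul n0 (zmul n x0)"
      by (simp add: zmul_zmul mult.commute)
    then have "of_int n * a0 = of_int n0 * a"
      using additive_extension_graph_zmul[OF G n0(2), of n] additive_extension_graph_zmul[OF G na, of n0]
        additive_extension_graphD(1)[OF G] by metis
    with n0(1) show "a = of_int n * (a0 / of_int n0)" by (simp add: field_simps)
  qed
next
  case False
  show ?thesis
  proof (rule that[of 0])
    fix n a assume na: "(zmul n x0, a) \<in> G"
    with False have "n = 0" by blast
    with na G0 show "a = of_int n * 0" using additive_extension_graphD(1)[OF G] by simp
  qed
qed

lemma additive_extension_graph_adjoin:
  assumes G: "additive_extension_graph A f G"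
    and slope: "\<And>n a. (zmul n x0, a) \<in> G \<Longrightarrow> a = of_int n * c"
  shows "additive_extension_graph A f {(y + zmul n x0, a + of_int n * c) | y a n. (y, a) \<in> G}"
    (is "additive_extension_graph A f ?G'")
  unfolding additive_extension_graph_def
proof (intro conjI allI impI ballI)
  note D = additive_extension_graphD[OF G]
  fix x a b assume "(x, a) \<in> ?G'" "(x, b) \<in> ?G'"
  then obtain y1 a1 n1 y2 a2 n2 where *: "x = y1 + zmul n1 x0" "a = a1 + of_int n1 * c" "(y1, a1) \<in> G"
    "x = y2 + zmul n2 x0" "b = a2 + of_int n2 * c" "(y2, a2) \<in> G"
    by blast
  have "y2 + - y1 = zmul (n1 - n2) x0" using *(1,4) by (simp add: zmul_diff_left algebra_simps)
  with D(2)[OF *(6) D(3)[OF *(3)]] have "a2 - a1 = of_int (n1 - n2) * c" using slope by fastforce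
  with * show "a = b" by (simp add: algebra_simps)
next
  note D = additive_extension_graphD[OF G]
  fix x a y b assume "(x, a) \<in> ?G'" "(y, b) \<in> ?G'"
  then obtain y1 a1 n1 y2 a2 n2 where *: "x = y1 + zmul n1 x0" "a = a1 + of_int n1 * c" "(y1, a1) \<in> G"
    "y = y2 + zmul n2 x0" "b = a2 + of_int n2 * c" "(y2, a2) \<in> G"
    by blast
  have "x + y = (y1 + y2) + zmul (n1 + n2) x0" "a + b = (a1 + a2) + of_int (n1 + n2) * c"
    using * by (simp_all add: zmul_add_left algebra_simps)
  with D(2)[OF *(3,6)] show "(x + y, a + b) \<in> ?G'" by blast
next
  fix x a assume "(x, a) \<in> ?G'"
  then obtain y1 a1 n1 where *: "x = y1 + zmul n1 x0" "a = a1 + of_int n1 * c" "(y1, a1) \<in> G"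
    by blast
  have "- x = - y1 + zmul (- n1) x0" "- a = - a1 + of_int (- n1) * c"
    using * by (simp_all add: zmul_minus_left)
  with additive_extension_graphD(3)[OF G *(3)] show "(- x, - a) \<in> ?G'" by blast
next
  fix x assume "x \<in> A"
  then have "(x + zmul 0 x0, f x + of_int 0 * c) \<in> ?G'" using additive_extension_graphD(4)[OF G] by blast
  then show "(x, f x) \<in> ?G'" by simp
qed

lemma additive_extension_graph_extend:
  assumes G: "additive_extension_graph A f G" and G0: "(0, 0) \<in> G"
  shows "\<exists>G' c. additive_extension_graph A f G' \<and> G \<subseteq> G' \<and> (x0, c) \<in> G'"
proof -
  obtain c where slope: "\<And>n a. (zmul n x0, a) \<in> G \<Longrightarrow> a = of_int n * c"
    using additive_extension_graph_slope[OF G G0] by blast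
  define G' where "G' = {(y + zmul n x0, a + of_int n * c) | y a n. (y, a) \<in> G}"
  have "G \<subseteq> G'"
  proof safe
    fix y a assume "(y, a) \<in> G"
    then have "(y + zmul 0 x0, a + of_int 0 * c) \<in> G'" unfolding G'_def by blast
    then show "(y, a) \<in> G'" by simp
  qed
  moreover have "(0 + zmul 1 x0, 0 + of_int 1 * c) \<in> G'" unfolding G'_def using G0 by blast
  then have "(x0, c) \<in> G'" by simp
  moreover have "additive_extension_graph A f G'"
    unfolding G'_def by (rule additive_extension_graph_adjoin[OF G slope])
  ultimately show ?thesis by blast
qed

lemma additive_extension_graph_maximal:
  assumes "additive_extension_graph A f G0"
  obtains M where "additive_extension_graph A f M"
    and "\<And>G. additive_extension_graph A f G \<Longrightarrow> M \<subseteq> G \<Longrightarrow> G = M"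
proof -
  define \<G> where "\<G> = {G. additive_extension_graph A f G}"
  have "\<exists>U\<in>\<G>. \<forall>G\<in>C. G \<subseteq> U" if "C \<in> chains \<G>" for C
  proof (cases "C = {}")
    case False
    from that have "C \<subseteq> \<G>" and "\<And>G H. G \<in> C \<Longrightarrow> H \<in> C \<Longrightarrow> G \<subseteq> H \<or> H \<subseteq> G"
      unfolding chains_def chain_subset_def by blast+
    then have "\<Union>C \<in> \<G>"
      using additive_extension_graph_Union[OF False, of A f] unfolding \<G>_def by blast
    then show ?thesis by blast
  qed (use assms \<G>_def in blast)
  then have "\<exists>M\<in>\<G>. \<forall>G\<in>\<G>. M \<subseteq> G \<longrightarrow> G = M"
    by (rule Zorn_Lemma2[rule_format])
  with that show ?thesis unfolding \<G>_def by blast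
qed

theorem additive_extension_exists:
  fixes f :: "'p::ab_group_add \<Rightarrow> 'b::field_char_0"
  assumes A0: "0 \<in> A" and A_add: "\<And>x y. x \<in> A \<Longrightarrow> y \<in> A \<Longrightarrow> x + y \<in> A"
    and A_minus: "\<And>x. x \<in> A \<Longrightarrow> - x \<in> A"
    and f_add: "\<And>x y. x \<in> A \<Longrightarrow> y \<in> A \<Longrightarrow> f (x + y) = f x + f y"
  shows "\<exists>F. (\<forall>x y. F (x + y) = F x + F y) \<and> (\<forall>x\<in>A. F x = f x)"
proof -
  have f0: "f 0 = 0" using f_add[OF A0 A0] by simp
  have f_minus: "f (- x) = - f x" if "x \<in> A" for x
    using f_add[OF that A_minus[OF that]] f0 by (simp add: add_eq_0_iff2)
  have "additive_extension_graph A f {(x, f x) | x. x \<in> A}"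
    unfolding additive_extension_graph_def using A_add A_minus f_add f_minus by auto
  then obtain M where M: "additive_extension_graph A f M"
    and M_max: "\<And>G. additive_extension_graph A f G \<Longrightarrow> M \<subseteq> G \<Longrightarrow> G = M"
    using additive_extension_graph_maximal by blast
  have M0: "(0, 0) \<in> M" using additive_extension_graphD(4)[OF M A0] f0 by simp
  have total: "\<exists>a. (x, a) \<in> M" for x
    using additive_extension_graph_extend[OF M M0, of x] M_max by blast
  define F where "F x = (THE a. (x, a) \<in> M)" for x
  have F: "(x, a) \<in> M \<Longrightarrow> F x = a" for x a
    unfolding F_def by (rule the_equality) (use additive_extension_graphD(1)[OF M] in blast)+
  show ?thesis
  proof (intro exI conjI allI ballI)
    fix x y
    obtain a b where "(x, a) \<in> M" "(y, b) \<in> M" using total by blast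
    then show "F (x + y) = F x + F y" using F additive_extension_graphD(2)[OF M] by metis
  next
    fix x assume "x \<in> A"
    then show "F x = f x" using F additive_extension_graphD(4)[OF M] by blast
  qed
qed

section \<open>Upper limits at infinity and power estimates\<close>

text \<open>Unlike \<open>Limsup_filtermap_eq\<close>, no injectivity is needed.\<close>
lemma Limsup_filtermap: "Limsup (filtermap f F) g = Limsup F (\<lambda>x. g (f x))"
proof (rule antisym[OF _ Limsup_filtermap_ge])
  show "Limsup (filtermap f F) g \<le> Limsup F (\<lambda>x. g (f x))"
    unfolding Limsup_def
  proof (rule INF_mono)
    fix P assume "P \<in> {P. eventually P F}"
    then have "(\<lambda>y. y \<in> f ` Collect P) \<in> {Q. eventually Q (filtermap f F)}"
      by (auto simp: eventually_filtermap elim: eventually_mono)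
    moreover have "(SUP y\<in>Collect (\<lambda>y. y \<in> f ` Collect P). g y) = (SUP x\<in>Collect P. g (f x))"
      by (simp add: image_image)
    ultimately show "\<exists>Q\<in>{Q. eventually Q (filtermap f F)}. (SUP y\<in>Collect Q. g y) \<le> (SUP x\<in>Collect P. g (f x))"
      by (metis order_refl)
  qed
qed

lemma filtermap_times_pos_at_top:
  fixes c :: real
  assumes "c > 0"
  shows "filtermap (\<lambda>u. c * u) at_top = at_top"
proof (rule filtermap_fun_inverse[where g="\<lambda>u. inverse c * u"])
  show "filterlim (\<lambda>u. inverse c * u) at_top at_top" "filterlim (\<lambda>u. c * u) at_top at_top"
    using assms by (auto intro!: filterlim_tendsto_pos_mult_at_top[OF tendsto_const _ filterlim_ident])
qed (use assms in simp)

lemma filtermap_nat_floor_at_top: "filtermap (\<lambda>u::real. nat \<lfloor>u\<rfloor>) at_top = sequentially"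
proof (rule filtermap_fun_inverse[where g=real])
  show "filterlim (\<lambda>u::real. nat \<lfloor>u\<rfloor>) sequentially at_top"
    by (rule filterlim_compose[OF filterlim_nat_sequentially filterlim_floor_sequentially])
qed (simp_all add: filterlim_real_sequentially)

text \<open>Only meaningful for eventually bounded \<open>f\<close>; otherwise the value is junk.\<close>
definition real_limsup :: "(real \<Rightarrow> real) \<Rightarrow> real" where
  "real_limsup f = real_of_ereal (Limsup at_top (\<lambda>u. ereal (f u)))"

lemma real_limsup_bounded:
  assumes "eventually (\<lambda>u. \<bar>f u\<bar> \<le> B) at_top"
  shows "Limsup at_top (\<lambda>u. ereal (f u)) = ereal (real_limsup f)" "\<bar>real_limsup f\<bar> \<le> B"
proof -
  have "Limsup at_top (\<lambda>u. ereal (f u)) \<le> ereal B"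
    by (rule Limsup_bounded) (use assms in \<open>auto elim!: eventually_mono\<close>)
  moreover have "ereal (- B) \<le> Limsup at_top (\<lambda>u. ereal (f u))"
    by (rule le_Limsup) (use assms in \<open>auto elim!: eventually_mono\<close>)
  ultimately show "Limsup at_top (\<lambda>u. ereal (f u)) = ereal (real_limsup f)" "\<bar>real_limsup f\<bar> \<le> B"
    unfolding real_limsup_def by (cases "Limsup at_top (\<lambda>u. ereal (f u))"; simp)+
qed

lemma Limsup_eq_real_limsup:
  assumes "Bfun f at_top"
  shows "Limsup at_top (\<lambda>u. ereal (f u)) = ereal (real_limsup f)"
  using assms real_limsup_bounded(1) unfolding Bfun_def real_norm_def by blast

lemma real_limsup_le:
  assumes f: "Bfun f at_top" and g: "Bfun g at_top"
    and le: "\<And>e. e > 0 \<Longrightarrow> eventually (\<lambda>u. f u \<le> g u + c + e) at_top"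
  shows "real_limsup f \<le> real_limsup g + c"
proof (rule field_le_epsilon)
  fix e :: real assume "e > 0"
  have "Limsup at_top (\<lambda>u. ereal (f u)) \<le> Limsup at_top (\<lambda>u. ereal (g u) + ereal (c + e))"
    by (rule Limsup_mono) (use le[OF \<open>e > 0\<close>] in \<open>auto elim!: eventually_mono\<close>)
  also have "\<dots> = Limsup at_top (\<lambda>u. ereal (g u)) + ereal (c + e)"
    by (rule Limsup_add_ereal_right) simp_all
  finally show "real_limsup f \<le> real_limsup g + c + e"
    unfolding Limsup_eq_real_limsup[OF f] Limsup_eq_real_limsup[OF g] by simp
qed

lemma real_limsup_dist_le:
  assumes "Bfun f at_top" and "Bfun g at_top"
    and "\<And>e. e > 0 \<Longrightarrow> eventually (\<lambda>u. \<bar>f u - g u\<bar> \<le> c + e) at_top"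
  shows "\<bar>real_limsup f - real_limsup g\<bar> \<le> c"
proof -
  have "real_limsup f \<le> real_limsup g + c"
    by (rule real_limsup_le[OF assms(1,2)], rule eventually_mono[OF assms(3)]) auto
  moreover have "real_limsup g \<le> real_limsup f + c"
    by (rule real_limsup_le[OF assms(2,1)], rule eventually_mono[OF assms(3)]) auto
  ultimately show ?thesis by linarith
qed

lemma real_limsup_eqI:
  assumes "Bfun f at_top" and "Bfun g at_top"
    and "\<And>e. e > 0 \<Longrightarrow> eventually (\<lambda>u. \<bar>f u - g u\<bar> \<le> e) at_top"
  shows "real_limsup f = real_limsup g"
  using real_limsup_dist_le[OF assms(1,2), of 0] assms(3) by simp

lemma real_limsup_cong:
  assumes "eventually (\<lambda>u. f u = g u) at_top"
  shows "real_limsup f = real_limsup g"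
  unfolding real_limsup_def
  by (rule arg_cong[where f=real_of_ereal], rule Limsup_eq) (use assms in \<open>auto elim!: eventually_mono\<close>)

lemma real_limsup_compose_times:
  assumes "c > 0"
  shows "real_limsup (\<lambda>u. f (c * u)) = real_limsup f"
  using Limsup_filtermap[of "\<lambda>u. c * u" at_top "\<lambda>v. ereal (f v)"]
  unfolding real_limsup_def filtermap_times_pos_at_top[OF assms] by simp

lemma real_limsup_cmult:
  assumes "k \<ge> 0" and "Bfun f at_top"
  shows "real_limsup (\<lambda>u. k * f u) = k * real_limsup f"
proof -
  have "Limsup at_top (\<lambda>u. ereal (k * f u)) = ereal k * Limsup at_top (\<lambda>u. ereal (f u))"
    using Limsup_ereal_mult_left[OF trivial_limit_at_top_linorder assms(1), of "\<lambda>u. ereal (f u)"]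
    by (simp only: times_ereal.simps)
  also have "\<dots> = ereal (k * real_limsup f)"
    by (simp only: Limsup_eq_real_limsup[OF assms(2)] times_ereal.simps)
  finally show ?thesis by (simp add: real_limsup_def)
qed

lemma real_limsup_nat_floor:
  assumes "\<And>n. \<bar>a n\<bar> \<le> B"
  shows "ereal (real_limsup (\<lambda>u. a (nat \<lfloor>u\<rfloor>))) = limsup (\<lambda>n. ereal (a n))"
proof -
  have "Limsup at_top (\<lambda>u::real. ereal (a (nat \<lfloor>u\<rfloor>))) = limsup (\<lambda>n. ereal (a n))"
    using Limsup_filtermap[of "\<lambda>u::real. nat \<lfloor>u\<rfloor>" at_top "\<lambda>n. ereal (a n)"]
    unfolding filtermap_nat_floor_at_top by (rule sym)
  moreover have "Limsup at_top (\<lambda>u::real. ereal (a (nat \<lfloor>u\<rfloor>))) = ereal (real_limsup (\<lambda>u. a (nat \<lfloor>u\<rfloor>)))"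
    using assms by (intro real_limsup_bounded(1)[of _ B]) simp
  ultimately show ?thesis by simp
qed

lemma floor_ratio_powr_bounds:
  fixes u s :: real
  assumes "u \<ge> 1" "s > 0"
  shows "1 \<le> real (nat \<lfloor>u\<rfloor>)" "(1 - inverse u) powr s \<le> (real (nat \<lfloor>u\<rfloor>) / u) powr s"
    "(real (nat \<lfloor>u\<rfloor>) / u) powr s \<le> 1"
proof -
  have "1 \<le> \<lfloor>u\<rfloor>" using assms by (simp add: le_floor_iff)
  then have n: "1 \<le> real (nat \<lfloor>u\<rfloor>)" "real (nat \<lfloor>u\<rfloor>) \<le> u" "u - 1 \<le> real (nat \<lfloor>u\<rfloor>)"
    by linarith+
  have "1 - inverse u = (u - 1) / u" using assms by (simp add: field_simps)
  also have "\<dots> \<le> real (nat \<lfloor>u\<rfloor>) / u" using n assms by (intro divide_right_mono) auto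
  finally show "(1 - inverse u) powr s \<le> (real (nat \<lfloor>u\<rfloor>) / u) powr s"
    "(real (nat \<lfloor>u\<rfloor>) / u) powr s \<le> 1" "1 \<le> real (nat \<lfloor>u\<rfloor>)"
    using n assms by (auto intro!: powr_mono2 powr_le1 simp: field_simps)
qed

lemma real_limsup_floor_powr:
  fixes g :: "nat \<Rightarrow> real"
  assumes s: "s > 0" and B: "\<And>n. \<bar>g n / real n powr s\<bar> \<le> B"
  shows "ereal (real_limsup (\<lambda>u. g (nat \<lfloor>u\<rfloor>) / u powr s)) = limsup (\<lambda>n. ereal (g n / real n powr s))"
proof -
  define a where "a n = g n / real n powr s" for n
  have approx: "\<bar>g (nat \<lfloor>u\<rfloor>) / u powr s - a (nat \<lfloor>u\<rfloor>)\<bar> \<le> B * (1 - (1 - inverse u) powr s)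
      \<and> \<bar>g (nat \<lfloor>u\<rfloor>) / u powr s\<bar> \<le> B" if "u \<ge> 1" for u
  proof -
    define n where "n = nat \<lfloor>u\<rfloor>"
    note ratio = floor_ratio_powr_bounds[OF that s, folded n_def]
    have g: "g n / u powr s = a n * (real n / u) powr s"
      using ratio(1) that by (simp add: a_def powr_divide)
    then have "g n / u powr s - a n = - (a n * (1 - (real n / u) powr s))"
      by (simp add: algebra_simps)
    then have "\<bar>g n / u powr s - a n\<bar> = \<bar>a n\<bar> * (1 - (real n / u) powr s)"
        "\<bar>g n / u powr s\<bar> = \<bar>a n\<bar> * (real n / u) powr s"
      using ratio g by (simp_all only: abs_minus_cancel abs_mult) simp_all
    moreover have "\<bar>a n\<bar> \<le> B" using B by (simp add: a_def)
    ultimately show ?thesis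
      using ratio mult_right_le_one_le[of "\<bar>a n\<bar>" "(real n / u) powr s"] unfolding n_def[symmetric]
      by (auto intro: mult_mono)
  qed
  have "((\<lambda>u. B * (1 - (1 - inverse u) powr s)) \<longlongrightarrow> B * (1 - (1 - 0) powr s)) at_top"
    by (intro tendsto_intros tendsto_inverse_0_at_top filterlim_ident) simp
  then have err: "eventually (\<lambda>u. B * (1 - (1 - inverse u) powr s) < e) at_top" if "e > 0" for e
    using that by (intro order_tendstoD(2)) auto
  have "real_limsup (\<lambda>u. g (nat \<lfloor>u\<rfloor>) / u powr s) = real_limsup (\<lambda>u. a (nat \<lfloor>u\<rfloor>))"
  proof (rule real_limsup_eqI)
    show "Bfun (\<lambda>u. g (nat \<lfloor>u\<rfloor>) / u powr s) at_top"
    proof (rule BfunI)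
      show "eventually (\<lambda>u. norm (g (nat \<lfloor>u\<rfloor>) / u powr s) \<le> B) at_top"
        using eventually_ge_at_top[of 1] by (rule eventually_mono) (use approx in simp)
    qed
    show "Bfun (\<lambda>u. a (nat \<lfloor>u\<rfloor>)) at_top"
      using B by (intro BfunI[where K=B] always_eventually) (simp add: a_def)
    show "eventually (\<lambda>u. \<bar>g (nat \<lfloor>u\<rfloor>) / u powr s - a (nat \<lfloor>u\<rfloor>)\<bar> \<le> e) at_top" if "e > 0" for e
      using err[OF that] eventually_ge_at_top[of 1] by eventually_elim (use approx in fastforce)
  qed
  also have "ereal \<dots> = limsup (\<lambda>n. ereal (a n))"
    using B by (intro real_limsup_nat_floor) (simp add: a_def)
  finally show ?thesis by (simp add: a_def)
qed

lemma tendsto_floor_mult_div: "(\<lambda>n. of_int \<lfloor>real (Suc n) * x\<rfloor> / real (Suc n)) \<longlonglongrightarrow> x"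
proof -
  have "\<bar>of_int \<lfloor>real (Suc n) * x\<rfloor> / real (Suc n) - x\<bar> \<le> inverse (real (Suc n))" for n
  proof -
    have "\<bar>of_int \<lfloor>real (Suc n) * x\<rfloor> - real (Suc n) * x\<bar> \<le> 1" by linarith
    moreover have "of_int \<lfloor>real (Suc n) * x\<rfloor> / real (Suc n) - x
        = (of_int \<lfloor>real (Suc n) * x\<rfloor> - real (Suc n) * x) / real (Suc n)"
      by (simp add: field_simps)
    ultimately show ?thesis
      by (simp add: abs_divide divide_right_mono inverse_eq_divide del: of_nat_Suc)
  qed
  then have "(\<lambda>n. of_int \<lfloor>real (Suc n) * x\<rfloor> / real (Suc n) - x) \<longlonglongrightarrow> 0"
    by (intro Lim_null_comparison[OF always_eventually LIMSEQ_inverse_real_of_nat]) simp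
  then show ?thesis by (simp add: LIM_zero_iff)
qed

lemma eventually_mult_powr_le:
  fixes a :: real
  assumes "a < 0" "e > 0"
  shows "eventually (\<lambda>u. K * u powr a \<le> e) at_top"
proof -
  have "((\<lambda>u. K * u powr a) \<longlongrightarrow> K * 0) at_top"
    by (intro tendsto_mult tendsto_const tendsto_neg_powr[OF assms(1) filterlim_ident])
  then have "eventually (\<lambda>u. K * u powr a < e) at_top"
    using assms(2) by (intro order_tendstoD(2)) auto
  then show ?thesis by (auto elim: eventually_mono)
qed

lemma real_limsup_eq_if_dist_le_powr:
  assumes "Bfun f at_top" "Bfun g at_top"
    and "\<And>u. u \<ge> 1 \<Longrightarrow> \<bar>f u - g u\<bar> \<le> K * u powr a" and "a < 0"
  shows "real_limsup f = real_limsup g"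
proof (rule real_limsup_eqI[OF assms(1,2)])
  fix e :: real assume "e > 0"
  from eventually_mult_powr_le[OF assms(4) this, of K] eventually_ge_at_top[of 1]
  show "eventually (\<lambda>u. \<bar>f u - g u\<bar> \<le> e) at_top"
    by eventually_elim (use assms(3) in fastforce)
qed

lemma powr_le_powr_ratio:
  fixes x y K a :: real
  assumes "x > 0" "y > 0" "K \<ge> 1" "y \<le> K * x" "x \<le> K * y"
  shows "x powr a \<le> K powr \<bar>a\<bar> * y powr a"
proof -
  have "(x / y) powr a \<le> K powr \<bar>a\<bar>"
  proof (cases "a \<ge> 0")
    case True
    have "x / y \<le> K" using assms by (simp add: field_simps)
    with True assms show ?thesis by (simp add: powr_mono2)
  next
    case False
    have "(x / y) powr a = (y / x) powr (- a)"
      using assms by (simp add: powr_divide powr_minus_divide)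
    also have "\<dots> \<le> K powr (- a)" using False assms by (intro powr_mono2) (auto simp: field_simps)
    finally show ?thesis using False by simp
  qed
  then show ?thesis using assms by (simp add: powr_divide field_simps)
qed

lemma powr_le_powr_max_0:
  fixes x y a :: real
  assumes "1 \<le> x" "x \<le> y"
  shows "x powr a \<le> y powr max a 0"
proof (cases "a \<ge> 0")
  case True
  with assms show ?thesis by (simp add: powr_mono2)
next
  case False
  then have "x powr a \<le> x powr 0" using assms by (intro powr_mono) auto
  with False assms show ?thesis by simp
qed

lemma min_powr_le_powr:
  fixes x K a :: real
  assumes "0 \<le> x" "x \<le> K"
  shows "min 1 ((K + 1) powr a) \<le> (x + 1) powr a"
proof (cases "a \<ge> 0")
  case True
  with assms show ?thesis by (simp add: ge_one_powr_ge_zero min.coboundedI1)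
next
  case False
  with assms have "(K + 1) powr a \<le> (x + 1) powr a" by (intro powr_mono2') auto
  then show ?thesis by (simp add: min.coboundedI2)
qed

lemma global_powr_bound:
  fixes g n :: "'a \<Rightarrow> real"
  assumes n_nonneg: "\<And>x. n x \<ge> 0"
    and large: "\<And>x. R \<le> n x \<Longrightarrow> \<bar>g x\<bar> \<le> C * n x powr a"
    and small: "\<And>N. \<exists>B. \<forall>x. n x \<le> N \<longrightarrow> \<bar>g x\<bar> \<le> B"
  shows "\<exists>A\<ge>0. \<forall>x. \<bar>g x\<bar> \<le> A * (n x + 1) powr a"
proof -
  define K where "K = max R 1"
  obtain B where B: "\<And>x. n x \<le> K \<Longrightarrow> \<bar>g x\<bar> \<le> B" using small by blast
  define \<kappa> where "\<kappa> = min 1 ((K + 1) powr a)"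
  have \<kappa>: "\<kappa> > 0" by (simp add: \<kappa>_def K_def)
  define A where "A = \<bar>C\<bar> * 2 powr \<bar>a\<bar> + \<bar>B\<bar> / \<kappa>"
  have "\<bar>g x\<bar> \<le> A * (n x + 1) powr a" for x
  proof (cases "K \<le> n x")
    case True
    then have "R \<le> n x" "n x \<ge> 1" by (auto simp: K_def)
    then have "\<bar>g x\<bar> \<le> \<bar>C\<bar> * n x powr a"
      using large[of x] abs_ge_self[of C] by (meson order_trans mult_right_mono powr_ge_zero)
    also have "\<dots> \<le> \<bar>C\<bar> * (2 powr \<bar>a\<bar> * (n x + 1) powr a)"
      using \<open>n x \<ge> 1\<close> by (intro mult_left_mono powr_le_powr_ratio) auto
    also have "\<dots> \<le> A * (n x + 1) powr a"
      unfolding A_def using \<kappa> by (simp add: algebra_simps)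
    finally show ?thesis .
  next
    case False
    then have "\<bar>B\<bar> / \<kappa> * \<kappa> \<le> \<bar>B\<bar> / \<kappa> * (n x + 1) powr a"
      using \<kappa> min_powr_le_powr[OF n_nonneg, of x K a] unfolding \<kappa>_def by (intro mult_left_mono) auto
    then have "\<bar>B\<bar> \<le> \<bar>B\<bar> / \<kappa> * (n x + 1) powr a"
      using \<kappa> by simp
    also have "\<dots> \<le> A * (n x + 1) powr a"
      unfolding A_def by (intro mult_right_mono) auto
    finally show ?thesis using B[of x] False by linarith
  qed
  moreover have "A \<ge> 0" unfolding A_def using \<kappa> by simp
  ultimately show ?thesis by blast
qed

text \<open>A family \<open>L\<^sub>1, \<dots>, L\<^sub>r\<close> is a function on \<open>nat\<close> together with its length \<open>r\<close>, indexed from \<open>0\<close>.\<close>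
definition int_comb :: "(nat \<Rightarrow> 'p::ab_group_add) \<Rightarrow> nat \<Rightarrow> (nat \<Rightarrow> int) \<Rightarrow> 'p" where
  "int_comb L r p = (\<Sum>i<r. zmul (p i) (L i))"

definition l1_int :: "nat \<Rightarrow> (nat \<Rightarrow> int) \<Rightarrow> real" where
  "l1_int r p = (\<Sum>i<r. real_of_int \<bar>p i\<bar>)"

definition l1 :: "nat \<Rightarrow> (nat \<Rightarrow> real) \<Rightarrow> real" where
  "l1 r c = (\<Sum>i<r. \<bar>c i\<bar>)"

lemma int_comb_cong: "(\<And>i. i < r \<Longrightarrow> p i = q i) \<Longrightarrow> int_comb L r p = int_comb L r q"
  unfolding int_comb_def by (intro sum.cong) auto

lemma int_comb_add: "int_comb L r (\<lambda>i. p i + q i) = int_comb L r p + int_comb L r q"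
  unfolding int_comb_def by (simp add: zmul_add_left sum.distrib)

lemma int_comb_mult: "int_comb L r (\<lambda>i. n * p i) = zmul n (int_comb L r p)"
  unfolding int_comb_def by (simp add: zmul_zmul zmul_sum_right)

lemma int_comb_minus: "int_comb L r (\<lambda>i. - p i) = - int_comb L r p"
  using int_comb_mult[of L r "- 1" p] by (simp add: zmul_minus_left)

lemma int_comb_diff: "int_comb L r (\<lambda>i. p i - q i) = int_comb L r p - int_comb L r q"
  using int_comb_add[of L r p "\<lambda>i. - q i"] by (simp add: int_comb_minus)

lemma int_comb_zero [simp]: "int_comb L r (\<lambda>_. 0) = 0"
  by (simp add: int_comb_def)

lemma int_comb_upd:
  assumes "j < r"
  shows "int_comb L r (p(j := p j + k)) = zmul k (L j) + int_comb L r p"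
proof -
  have "int_comb L r (p(j := p j + k)) = (\<Sum>i<r. zmul (p i) (L i) + (if i = j then zmul k (L j) else 0))"
    unfolding int_comb_def by (intro sum.cong) (auto simp: zmul_add_left)
  also have "\<dots> = zmul k (L j) + int_comb L r p"
    using assms by (simp add: sum.distrib int_comb_def)
  finally show ?thesis .
qed

lemma int_comb_unit: "j < r \<Longrightarrow> int_comb L r (\<lambda>i. if i = j then 1 else 0) = L j"
  unfolding int_comb_def by (simp add: if_distrib[of "\<lambda>k. zmul k _"] cong: if_cong)

lemma l1_int_nonneg: "l1_int r p \<ge> 0"
  by (simp add: l1_int_def sum_nonneg)

lemma l1_nonneg: "l1 r c \<ge> 0"
  by (simp add: l1_def sum_nonneg)

lemma abs_le_l1_int: "i < r \<Longrightarrow> real_of_int \<bar>p i\<bar> \<le> l1_int r p"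
  unfolding l1_int_def by (rule member_le_sum) auto

lemma l1_int_triangle: "l1_int r (\<lambda>i. p i + q i) \<le> l1_int r p + l1_int r q"
  unfolding l1_int_def sum.distrib[symmetric] by (intro sum_mono) simp

lemma l1_int_diff_ge: "l1_int r p - l1_int r (\<lambda>i. q i - p i) \<le> l1_int r q"
  using l1_int_triangle[of r q "\<lambda>i. p i - q i"]
  by (simp add: l1_int_def abs_minus_commute)

lemma l1_int_diff_le: "l1_int r q \<le> l1_int r p + l1_int r (\<lambda>i. q i - p i)"
  using l1_int_triangle[of r p "\<lambda>i. q i - p i"] by simp

lemma l1_eq_0_iff: "l1 r c = 0 \<longleftrightarrow> (\<forall>i<r. c i = 0)"
  unfolding l1_def by (subst sum_nonneg_eq_0_iff) auto

lemma abs_floor_diff_le: "\<bar>real_of_int (\<lfloor>x\<rfloor> - \<lfloor>y\<rfloor>)\<bar> \<le> \<bar>x - y\<bar> + 1"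
  by (simp add: abs_le_iff) linarith

lemma l1_int_floor_le:
  assumes "u \<ge> 0"
  shows "l1_int r (\<lambda>i. \<lfloor>u * c i\<rfloor>) \<le> u * l1 r c + r"
proof -
  have "l1_int r (\<lambda>i. \<lfloor>u * c i\<rfloor>) \<le> (\<Sum>i<r. u * \<bar>c i\<bar> + 1)"
    unfolding l1_int_def
    using abs_floor_diff_le[of "u * c _" 0] assms by (intro sum_mono) (simp add: abs_mult)
  then show ?thesis by (simp add: sum.distrib sum_distrib_left l1_def)
qed

lemma l1_int_floor_ge:
  assumes "u \<ge> 0"
  shows "u * l1 r c - r \<le> l1_int r (\<lambda>i. \<lfloor>u * c i\<rfloor>)"
proof -
  have "(\<Sum>i<r. u * \<bar>c i\<bar> - 1) \<le> l1_int r (\<lambda>i. \<lfloor>u * c i\<rfloor>)"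
    unfolding l1_int_def
  proof (rule sum_mono)
    fix i
    have "\<bar>u * c i\<bar> - 1 \<le> \<bar>real_of_int \<lfloor>u * c i\<rfloor>\<bar>" by linarith
    with assms show "u * \<bar>c i\<bar> - 1 \<le> real_of_int \<bar>\<lfloor>u * c i\<rfloor>\<bar>" by (simp add: abs_mult)
  qed
  then show ?thesis by (simp add: sum_subtractf sum_distrib_left l1_def)
qed

lemma l1_int_floor_diff_le:
  assumes "u \<ge> 0"
  shows "l1_int r (\<lambda>i. \<lfloor>u * c' i\<rfloor> - \<lfloor>u * c i\<rfloor>) \<le> u * l1 r (\<lambda>i. c' i - c i) + r"
proof -
  have "l1_int r (\<lambda>i. \<lfloor>u * c' i\<rfloor> - \<lfloor>u * c i\<rfloor>) \<le> (\<Sum>i<r. u * \<bar>c' i - c i\<bar> + 1)"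
    unfolding l1_int_def using abs_floor_diff_le[of "u * c' _" "u * c _"] assms
    by (intro sum_mono) (simp add: abs_mult right_diff_distrib[symmetric])
  then show ?thesis by (simp add: sum.distrib sum_distrib_left l1_def)
qed

lemma bounded_on_l1_int_ball:
  fixes f :: "'p::ab_group_add \<Rightarrow> real"
  shows "\<exists>B. \<forall>p. l1_int r p \<le> N \<longrightarrow> \<bar>f (int_comb L r p)\<bar> \<le> B"
proof -
  define X where "X = {xs. set xs \<subseteq> {-\<lceil>N\<rceil>..\<lceil>N\<rceil>} \<and> length xs = r}"
  define g where "g xs = f (\<Sum>i<r. zmul (xs ! i) (L i))" for xs
  have "finite X" unfolding X_def by (rule finite_lists_length_eq) simp
  have "\<bar>f (int_comb L r p)\<bar> \<le> (\<Sum>xs\<in>X. \<bar>g xs\<bar>)" if "l1_int r p \<le> N" for p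
  proof -
    have "- \<lceil>N\<rceil> \<le> p i \<and> p i \<le> \<lceil>N\<rceil>" if "i < r" for i
      using abs_le_l1_int[OF that, of p] \<open>l1_int r p \<le> N\<close> by linarith
    then have "map p [0..<r] \<in> X" unfolding X_def by auto
    moreover have "f (int_comb L r p) = g (map p [0..<r])"
      unfolding g_def int_comb_def by (intro arg_cong[where f=f] sum.cong) auto
    ultimately show ?thesis using member_le_sum[of _ X "\<lambda>xs. \<bar>g xs\<bar>"] \<open>finite X\<close> by simp
  qed
  then show ?thesis by blast
qed

lemma sum_abs_unit_decrease:
  fixes d :: "nat \<Rightarrow> int"
  assumes "(\<Sum>i<r. \<bar>d i\<bar>) \<noteq> 0"
  obtains j k where "j < r" "\<bar>k\<bar> = 1" "(\<Sum>i<r. \<bar>(d(j := d j - k)) i\<bar>) = (\<Sum>i<r. \<bar>d i\<bar>) - 1"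
proof -
  obtain j where j: "j < r" "d j \<noteq> 0" using assms by (metis lessThan_iff sum.neutral abs_0)
  define d' where "d' = d(j := d j - sgn (d j))"
  have "(\<Sum>i\<in>{..<r} - {j}. \<bar>d' i\<bar>) = (\<Sum>i\<in>{..<r} - {j}. \<bar>d i\<bar>)"
    unfolding d'_def by (intro sum.cong) auto
  moreover have "\<bar>d' j\<bar> = \<bar>d j\<bar> - 1"
    unfolding d'_def using j(2) by (auto simp: sgn_if)
  ultimately have "(\<Sum>i<r. \<bar>d' i\<bar>) = (\<Sum>i<r. \<bar>d i\<bar>) - 1"
    using sum.remove[of "{..<r}" j "\<lambda>i. \<bar>d i\<bar>"] sum.remove[of "{..<r}" j "\<lambda>i. \<bar>d' i\<bar>"] j(1)
    by simp
  with j show ?thesis using that[of j "sgn (d j)"] by (simp add: d'_def abs_sgn)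
qed

text \<open>Telescoping along a monotone lattice path from \<open>p\<close> to \<open>p + d\<close>, one unit step at a time.\<close>
lemma lattice_path_bound:
  fixes f :: "'p::ab_group_add \<Rightarrow> real"
  assumes "\<And>q j k. j < r \<Longrightarrow> \<bar>k\<bar> = 1 \<Longrightarrow> l1_int r (\<lambda>i. q i - p i) < l1_int r d \<Longrightarrow>
      \<bar>f (int_comb L r (q(j := q j + k))) - f (int_comb L r q)\<bar> \<le> c"
  shows "\<bar>f (int_comb L r (\<lambda>i. p i + d i)) - f (int_comb L r p)\<bar> \<le> l1_int r d * c"
  using assms
proof (induction "nat (\<Sum>i<r. \<bar>d i\<bar>)" arbitrary: d)
  case 0
  then have "(\<Sum>i<r. \<bar>d i\<bar>) = 0"
    using sum_nonneg[of "{..<r}" "\<lambda>i. \<bar>d i\<bar>"] by linarith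
  then have "\<forall>i<r. d i = 0" by (subst (asm) sum_nonneg_eq_0_iff) auto
  then have "int_comb L r (\<lambda>i. p i + d i) = int_comb L r p" "l1_int r d = 0"
    by (auto simp: l1_int_def intro: int_comb_cong)
  then show ?case by simp
next
  case (Suc n)
  then obtain j k where jk: "j < r" "\<bar>k\<bar> = 1"
    and d'_sum: "(\<Sum>i<r. \<bar>(d(j := d j - k)) i\<bar>) = (\<Sum>i<r. \<bar>d i\<bar>) - 1"
    by (metis sum_abs_unit_decrease nat_0 nat.distinct(1))
  define d' where "d' = d(j := d j - k)"
  have l1_d': "l1_int r d' = l1_int r d - 1"
    using d'_sum unfolding l1_int_def d'_def by (metis of_int_diff of_int_1 of_int_sum)
  define q where "q = (\<lambda>i. p i + d' i)"
  have "\<bar>f (int_comb L r q) - f (int_comb L r p)\<bar> \<le> l1_int r d' * c"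
    unfolding q_def
  proof (rule Suc.hyps(1))
    show "n = nat (\<Sum>i<r. \<bar>d' i\<bar>)" using Suc.hyps(2) d'_sum by (simp add: d'_def)
    show "\<bar>f (int_comb L r (q'(j' := q' j' + k'))) - f (int_comb L r q')\<bar> \<le> c"
      if "j' < r" "\<bar>k'\<bar> = 1" "l1_int r (\<lambda>i. q' i - p i) < l1_int r d'" for q' j' k'
      using Suc.prems[OF that(1,2)] that(3) l1_d' by simp
  qed
  moreover have "\<bar>f (int_comb L r (q(j := q j + k))) - f (int_comb L r q)\<bar> \<le> c"
    by (rule Suc.prems[OF jk]) (use l1_d' in \<open>simp add: q_def\<close>)
  moreover have "q(j := q j + k) = (\<lambda>i. p i + d i)"
    unfolding q_def d'_def by auto
  ultimately show ?case using l1_d' by (simp add: algebra_simps)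
qed

text \<open>Write \<open>u = b w + \<rho>\<close> with \<open>0 \<le> \<rho> \<le> b\<close>: the part \<open>w a z\<close> of \<open>u (a / b) z\<close> is an integer relation,
  and the rest moves each coordinate of \<open>\<lfloor>u c\<rfloor>\<close> by at most \<open>\<bar>a z\<^sub>i\<bar> + 1\<close>.\<close>
lemma int_comb_floor_shift_relation:
  fixes u :: real and c :: "nat \<Rightarrow> real"
  assumes z: "int_comb L r z = 0" and b: "b > 0" and u: "u \<ge> 0"
  obtains e where
    "int_comb L r (\<lambda>i. \<lfloor>u * (c i + of_int a / of_int b * of_int (z i))\<rfloor>)
       = int_comb L r (\<lambda>i. \<lfloor>u * c i\<rfloor> + e i)"
    and "l1_int r e \<le> \<bar>a\<bar> * l1_int r z + r"
proof -
  define w where "w = \<lfloor>u / of_int b\<rfloor>"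
  define \<rho> where "\<rho> = u - of_int b * of_int w"
  have \<rho>: "0 \<le> \<rho>" "\<rho> \<le> of_int b"
    using b floor_divide_lower[of "of_int b" u] floor_divide_upper[of "of_int b" u]
    unfolding \<rho>_def w_def by (simp_all add: algebra_simps)
  define e where "e i = \<lfloor>u * c i + \<rho> * of_int a * of_int (z i) / of_int b\<rfloor> - \<lfloor>u * c i\<rfloor>" for i
  have "u * (c i + of_int a / of_int b * of_int (z i))
      = (u * c i + \<rho> * of_int a * of_int (z i) / of_int b) + of_int (w * a * z i)" for i
    using b unfolding \<rho>_def by (simp add: field_simps)
  then have "\<lfloor>u * (c i + of_int a / of_int b * of_int (z i))\<rfloor> = (\<lfloor>u * c i\<rfloor> + e i) + (w * a) * z i" for i
    unfolding e_def by (simp only: floor_add_int[symmetric])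
  then have "int_comb L r (\<lambda>i. \<lfloor>u * (c i + of_int a / of_int b * of_int (z i))\<rfloor>)
      = int_comb L r (\<lambda>i. \<lfloor>u * c i\<rfloor> + e i) + zmul (w * a) (int_comb L r z)"
    by (simp only: int_comb_add int_comb_mult)
  moreover have "l1_int r e \<le> (\<Sum>i<r. real_of_int (\<bar>a\<bar> * \<bar>z i\<bar>) + 1)"
    unfolding l1_int_def
  proof (rule sum_mono)
    fix i
    have "real_of_int \<bar>e i\<bar> \<le> \<bar>\<rho> * of_int a * of_int (z i) / of_int b\<bar> + 1"
      using abs_floor_diff_le[of "u * c i + \<rho> * of_int a * of_int (z i) / of_int b" "u * c i"]
      by (simp add: e_def)
    also have "\<bar>\<rho> * of_int a * of_int (z i) / of_int b\<bar> = \<rho> / of_int b * (\<bar>of_int a\<bar> * \<bar>of_int (z i)\<bar>)"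
      using \<rho> b by (simp add: abs_mult abs_divide)
    also have "\<dots> \<le> 1 * (\<bar>of_int a\<bar> * \<bar>of_int (z i)\<bar>)"
      using \<rho> b by (intro mult_right_mono) simp_all
    finally show "real_of_int \<bar>e i\<bar> \<le> real_of_int (\<bar>a\<bar> * \<bar>z i\<bar>) + 1" by simp
  qed
  ultimately show ?thesis
    using z that by (simp add: sum.distrib sum_distrib_left l1_int_def)
qed

definition join :: "nat \<Rightarrow> (nat \<Rightarrow> 'a) \<Rightarrow> (nat \<Rightarrow> 'a) \<Rightarrow> nat \<Rightarrow> 'a" where
  "join m f g j = (if j < m then f j else g (j - m))"

lemma sum_join: "(\<Sum>j<m + n. join m f g j) = (\<Sum>j<m. f j) + (\<Sum>j<n. g j)"
proof (induction n)
  case 0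
  then show ?case by (simp add: join_def)
next
  case (Suc n)
  then show ?case by (simp add: join_def add.assoc)
qed

lemma int_comb_join: "int_comb (join m L L') (m + n) (join m p q) = int_comb L m p + int_comb L' n q"
proof -
  have "zmul (join m p q j) (join m L L' j) = join m (\<lambda>j. zmul (p j) (L j)) (\<lambda>j. zmul (q j) (L' j)) j" for j
    by (simp add: join_def)
  then show ?thesis by (simp add: int_comb_def sum_join)
qed

lemma sum_join_scaleR:
  "(\<Sum>j<m + n. join m c c' j *\<^sub>R f (join m L L' j)) = (\<Sum>j<m. c j *\<^sub>R f (L j)) + (\<Sum>j<n. c' j *\<^sub>R f (L' j))"
proof -
  have "join m c c' j *\<^sub>R f (join m L L' j) = join m (\<lambda>j. c j *\<^sub>R f (L j)) (\<lambda>j. c' j *\<^sub>R f (L' j)) j" for j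
    by (simp add: join_def)
  then show ?thesis by (simp add: sum_join)
qed

section \<open>Relations span the kernel of the coordinate map\<close>

lemma linear_functional_separating_span:
  fixes x :: "'a::real_vector"
  assumes "x \<notin> span S"
  obtains f :: "'a \<Rightarrow> real" where "linear f" "\<And>y. y \<in> span S \<Longrightarrow> f y = 0" "f x = 1"
proof -
  obtain B where B: "B \<subseteq> S" "independent B" "S \<subseteq> span B"
    by (rule maximal_independent_subset)
  have span_B: "span B = span S"
    using span_mono[OF B(1)] span_minimal[OF B(3) subspace_span] by (rule antisym)
  have "independent (insert x B)"
    using B(2) assms by (simp add: independent_insertI span_B)
  then obtain f :: "'a \<Rightarrow> real"
    where f: "linear f" "\<And>y. y \<in> insert x B \<Longrightarrow> f y = (if y = x then 1 else 0)"
    using linear_independent_extend[of "insert x B" "\<lambda>y. if y = x then 1 else 0"] by blast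
  have "x \<notin> B" using assms span_B span_base by blast
  have "f y = 0" if "y \<in> span S" for y
    by (rule real_vector.linear_eq_0_on_span[OF f(1) _ that[folded span_B]])
      (use f(2) \<open>x \<notin> B\<close> in auto)
  with f that show ?thesis by simp
qed

text \<open>\<open>\<real>\<^sup>r\<close>, embedded in the real vector space of finitely supported functions on \<open>nat\<close>.\<close>
definition coeff_vec :: "nat \<Rightarrow> (nat \<Rightarrow> real) \<Rightarrow> nat \<Rightarrow>\<^sub>0 real" where
  "coeff_vec r c = Abs_poly_mapping (\<lambda>i. if i < r then c i else 0)"

lemma lookup_coeff_vec [simp]: "Poly_Mapping.lookup (coeff_vec r c) i = (if i < r then c i else 0)"
proof -
  have "finite {i. (if i < r then c i else 0) \<noteq> 0}"
    by (rule finite_subset[of _ "{..<r}"]) auto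
  then show ?thesis unfolding coeff_vec_def by simp
qed

lemma lookup_scaleR_poly_mapping [simp]:
  "Poly_Mapping.lookup (a *\<^sub>R x) i = a *\<^sub>R Poly_Mapping.lookup x i"
proof -
  have "finite {i. a *\<^sub>R Poly_Mapping.lookup x i \<noteq> 0}"
    by (rule finite_subset[of _ "Poly_Mapping.keys x"]) (auto simp: in_keys_iff)
  then show ?thesis unfolding scaleR_poly_mapping_def by simp
qed

lemma coeff_vec_add: "coeff_vec r (\<lambda>i. c i + c' i) = coeff_vec r c + coeff_vec r c'"
  by (rule poly_mapping_eqI) (simp add: lookup_add)

lemma coeff_vec_eq_sum_units: "coeff_vec r d = (\<Sum>j<r. d j *\<^sub>R coeff_vec r (\<lambda>i. if i = j then 1 else 0))"
  by (rule poly_mapping_eqI) (simp add: lookup_sum if_distrib[of "\<lambda>x. _ * x"] sum.delta cong: if_cong)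

lemma int_comb_additive_extension:
  fixes \<phi> :: "(nat \<Rightarrow> int) \<Rightarrow> 'b::field_char_0" and L :: "nat \<Rightarrow> 'p::ab_group_add"
  assumes add: "\<And>p q. \<phi> (\<lambda>i. p i + q i) = \<phi> p + \<phi> q"
    and relation: "\<And>p. int_comb L r p = 0 \<Longrightarrow> \<phi> p = 0"
  obtains F where "\<And>x y. F (x + y) = F x + F y" "\<And>p. F (int_comb L r p) = \<phi> p"
proof -
  have \<phi>_eq: "\<phi> p = \<phi> q" if "int_comb L r p = int_comb L r q" for p q
    using add[of "\<lambda>i. p i - q i" q] relation[of "\<lambda>i. p i - q i"] that by (simp add: int_comb_diff)
  define A where "A = range (int_comb L r)"
  define f where "f x = \<phi> (SOME p. x = int_comb L r p)" for x
  have f: "f (int_comb L r p) = \<phi> p" for p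
    unfolding f_def by (rule \<phi>_eq[symmetric], rule someI[of _ p]) simp
  have "\<exists>F. (\<forall>x y. F (x + y) = F x + F y) \<and> (\<forall>x\<in>A. F x = f x)"
  proof (rule additive_extension_exists)
    show "0 \<in> A" unfolding A_def using int_comb_zero by (metis rangeI)
    show "x + y \<in> A" if "x \<in> A" "y \<in> A" for x y
      using that by (auto simp: A_def simp flip: int_comb_add)
    show "- x \<in> A" if "x \<in> A" for x
    proof -
      from that obtain p where "x = int_comb L r p" by (auto simp: A_def)
      then have "- x = int_comb L r (\<lambda>i. - p i)" by (simp add: int_comb_minus)
      then show ?thesis by (simp add: A_def)
    qed
    show "f (x + y) = f x + f y" if "x \<in> A" "y \<in> A" for x y
      using that by (auto simp: A_def f add simp flip: int_comb_add)
  qed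
  with that show ?thesis unfolding A_def using f by auto
qed

text \<open>The kernel of \<open>\<real>\<^sup>r \<rightarrow> P \<otimes> \<real>\<close>, \<open>d \<mapsto> \<Sum>d\<^sub>j \<iota>(L\<^sub>j)\<close>, is spanned by the integer relations among
  the \<open>L\<^sub>j\<close>. Otherwise a functional separating \<open>d\<close> from the relations induces an additive map on
  the subgroup generated by the \<open>L\<^sub>j\<close>; extended to \<open>P\<close> and factored through \<open>\<iota>\<close>, it would not
  vanish on \<open>\<Sum>d\<^sub>j \<iota>(L\<^sub>j) = 0\<close>.\<close>
lemma real_tensor_kernel_in_span_relations:
  assumes tensor: "real_tensor \<iota>" and d: "(\<Sum>j<r. d j *\<^sub>R \<iota> (L j)) = 0"
  shows "coeff_vec r d \<in> span {coeff_vec r (\<lambda>i. of_int (z i)) | z. int_comb L r z = 0}"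
    (is "_ \<in> span ?Z")
proof (rule ccontr)
  assume "coeff_vec r d \<notin> span ?Z"
  from linear_functional_separating_span[OF this]
  obtain \<mu> :: "(nat \<Rightarrow>\<^sub>0 real) \<Rightarrow> real"
    where \<mu>: "linear \<mu>" "\<And>y. y \<in> span ?Z \<Longrightarrow> \<mu> y = 0" "\<mu> (coeff_vec r d) = 1"
    by blast
  define \<phi> where "\<phi> p = \<mu> (coeff_vec r (\<lambda>i. of_int (p i)))" for p
  have "\<phi> (\<lambda>i. p i + q i) = \<phi> p + \<phi> q" for p q
    unfolding \<phi>_def using coeff_vec_add[of r "\<lambda>i. of_int (p i)" "\<lambda>i. of_int (q i)"]
    by (simp add: linear_add[OF \<mu>(1)])
  moreover have "\<phi> p = 0" if "int_comb L r p = 0" for p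
    unfolding \<phi>_def using that by (intro \<mu>(2) span_base) blast
  ultimately obtain F where F: "\<And>x y. F (x + y) = F x + F y" "\<And>p. F (int_comb L r p) = \<phi> p"
    using int_comb_additive_extension[of \<phi> L r] by blast
  obtain g where g: "linear g" "\<And>p. g (\<iota> p) = F p"
    using tensor F(1) unfolding real_tensor_def by blast
  have "0 = g (\<Sum>j<r. d j *\<^sub>R \<iota> (L j))" using d linear_0[OF g(1)] by simp
  also have "\<dots> = (\<Sum>j<r. d j * F (int_comb L r (\<lambda>i. if i = j then 1 else 0)))"
    using g by (simp add: linear_sum linear_scale int_comb_unit)
  also have "\<dots> = \<mu> (\<Sum>j<r. d j *\<^sub>R coeff_vec r (\<lambda>i. if i = j then 1 else 0))"
    using \<mu>(1) by (simp add: F(2) \<phi>_def linear_sum linear_scale if_distrib[of real_of_int] cong: if_cong)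
  also have "\<dots> = 1" using \<mu>(3) by (simp flip: coeff_vec_eq_sum_units)
  finally show False by simp
qed

section \<open>The homogenization in coordinates\<close>

text \<open>The hypotheses of the theorem for families indexed from \<open>0\<close>; \<open>l1_int r p\<close> is \<open>|m|\<close>.\<close>
locale growth_conditions =
  fixes h :: "'p::ab_group_add \<Rightarrow> real" and s :: real
  assumes s_pos: "s > 0"
    and growth: "\<And>r L. \<exists>C R. \<forall>p. R \<le> l1_int r p \<longrightarrow>
        \<bar>h (int_comb L r p)\<bar> \<le> C * l1_int r p powr s"
    and shift: "\<And>r L y. \<exists>C R. \<forall>p. R \<le> l1_int r p \<longrightarrow>
        \<bar>h (y + int_comb L r p) - h (int_comb L r p)\<bar> \<le> C * l1_int r p powr (s - 1)"
begin

lemma growth_bound: "\<exists>B\<ge>0. \<forall>p. \<bar>h (int_comb L r p)\<bar> \<le> B * (l1_int r p + 1) powr s"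
proof -
  obtain C R where "\<And>p. R \<le> l1_int r p \<Longrightarrow> \<bar>h (int_comb L r p)\<bar> \<le> C * l1_int r p powr s"
    using growth by blast
  then show ?thesis
    by (intro global_powr_bound[where g="\<lambda>p. h (int_comb L r p)"])
      (use l1_int_nonneg bounded_on_l1_int_ball[where f=h] in auto)
qed

lemma shift_bound:
  "\<exists>A\<ge>0. \<forall>p. \<bar>h (y + int_comb L r p) - h (int_comb L r p)\<bar> \<le> A * (l1_int r p + 1) powr (s - 1)"
proof -
  obtain C R where "\<And>p. R \<le> l1_int r p \<Longrightarrow>
      \<bar>h (y + int_comb L r p) - h (int_comb L r p)\<bar> \<le> C * l1_int r p powr (s - 1)"
    using shift by blast
  then show ?thesis
    by (intro global_powr_bound[where g="\<lambda>p. h (y + int_comb L r p) - h (int_comb L r p)"])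
      (use l1_int_nonneg bounded_on_l1_int_ball[where f="\<lambda>x. h (y + x) - h x"] in auto)
qed

lemma unit_step_bound:
  "\<exists>A\<ge>0. \<forall>p j k. j < r \<longrightarrow> \<bar>k\<bar> = 1 \<longrightarrow>
     \<bar>h (int_comb L r (p(j := p j + k))) - h (int_comb L r p)\<bar> \<le> A * (l1_int r p + 1) powr (s - 1)"
proof -
  obtain A where A: "\<And>j k. A j k \<ge> 0" "\<And>j k p. \<bar>h (zmul k (L j) + int_comb L r p) - h (int_comb L r p)\<bar>
      \<le> A j k * (l1_int r p + 1) powr (s - 1)"
  proof -
    have "\<forall>j k. \<exists>A\<ge>0. \<forall>p. \<bar>h (zmul k (L j) + int_comb L r p) - h (int_comb L r p)\<bar>
        \<le> A * (l1_int r p + 1) powr (s - 1)"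
      using shift_bound by blast
    then show ?thesis using that by metis
  qed
  define A' where "A' = (\<Sum>j<r. A j 1 + A j (-1))"
  have "A j k \<le> A'" if "j < r" "\<bar>k\<bar> = 1" for j k
  proof -
    have "A j 1 + A j (-1) \<le> A'"
      unfolding A'_def using that(1) A(1) by (intro member_le_sum) (auto intro: add_nonneg_nonneg)
    moreover have "k = 1 \<or> k = -1" using that(2) by linarith
    ultimately show ?thesis using A(1)[of j 1] A(1)[of j "-1"] by auto
  qed
  then have "\<bar>h (int_comb L r (p(j := p j + k))) - h (int_comb L r p)\<bar> \<le> A' * (l1_int r p + 1) powr (s - 1)"
    if "j < r" "\<bar>k\<bar> = 1" for p j k
    using A(2)[of k j p] that by (simp add: int_comb_upd) (meson mult_right_mono order_trans powr_ge_zero)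
  moreover have "A' \<ge> 0" unfolding A'_def using A(1) by (simp add: sum_nonneg add_nonneg_nonneg)
  ultimately show ?thesis by blast
qed

lemma lattice_diff_bound:
  obtains A where "A \<ge> 0"
    and "\<And>m d W. (\<And>q. l1_int r (\<lambda>i. q i - m i) < l1_int r d \<Longrightarrow> (l1_int r q + 1) powr (s - 1) \<le> W) \<Longrightarrow>
      \<bar>h (int_comb L r (\<lambda>i. m i + d i)) - h (int_comb L r m)\<bar> \<le> l1_int r d * (A * W)"
proof -
  obtain A where A: "A \<ge> 0" "\<And>p j k. j < r \<Longrightarrow> \<bar>k\<bar> = 1 \<Longrightarrow>
      \<bar>h (int_comb L r (p(j := p j + k))) - h (int_comb L r p)\<bar> \<le> A * (l1_int r p + 1) powr (s - 1)"
    using unit_step_bound by blast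
  show ?thesis
  proof (rule that[OF A(1)])
    fix m d W
    assume W: "\<And>q. l1_int r (\<lambda>i. q i - m i) < l1_int r d \<Longrightarrow> (l1_int r q + 1) powr (s - 1) \<le> W"
    show "\<bar>h (int_comb L r (\<lambda>i. m i + d i)) - h (int_comb L r m)\<bar> \<le> l1_int r d * (A * W)"
      by (rule lattice_path_bound) (use A W in \<open>meson mult_left_mono order_trans\<close>)
  qed
qed

lemma multiple_ratio_bounded: "\<exists>B. \<forall>n. \<bar>h (zmul (int n) L) / real n powr s\<bar> \<le> B"
proof -
  obtain B where B: "B \<ge> 0" "\<And>p. \<bar>h (int_comb (\<lambda>_. L) 1 p)\<bar> \<le> B * (l1_int 1 p + 1) powr s"
    using growth_bound by blast
  have "\<bar>h (zmul (int n) L) / real n powr s\<bar> \<le> B * 2 powr s" for n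
  proof (cases "n = 0")
    case False
    have "\<bar>h (zmul (int n) L)\<bar> \<le> B * (real n + 1) powr s"
      using B(2)[of "\<lambda>_. int n"] by (simp add: int_comb_def l1_int_def)
    also have "\<dots> \<le> B * (2 * real n) powr s"
      using False B(1) s_pos by (intro mult_left_mono powr_mono2) auto
    finally show ?thesis
      using False by (simp add: powr_mult abs_divide pos_divide_le_eq ac_simps)
  qed (use B(1) in simp)
  then show ?thesis by blast
qed

definition scaled_h :: "(nat \<Rightarrow> 'p) \<Rightarrow> nat \<Rightarrow> (nat \<Rightarrow> real) \<Rightarrow> real \<Rightarrow> real" where
  "scaled_h L r c u = h (int_comb L r (\<lambda>i. \<lfloor>u * c i\<rfloor>)) / u powr s"

definition hhat_comb :: "(nat \<Rightarrow> 'p) \<Rightarrow> nat \<Rightarrow> (nat \<Rightarrow> real) \<Rightarrow> real" where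
  "hhat_comb L r c = real_limsup (scaled_h L r c)"

lemma abs_scaled_h_diff_le:
  assumes "u > 0"
    and "\<bar>h (int_comb L r (\<lambda>i. \<lfloor>u * c' i\<rfloor>)) - h (int_comb L r (\<lambda>i. \<lfloor>u * c i\<rfloor>))\<bar> \<le> X * u powr s"
  shows "\<bar>scaled_h L r c' u - scaled_h L r c u\<bar> \<le> X"
  using assms by (simp add: scaled_h_def abs_divide pos_divide_le_eq flip: diff_divide_distrib)

lemma scaled_h_bound:
  obtains B where "B \<ge> 0"
    and "\<And>c e. e > 0 \<Longrightarrow> l1 r c \<le> e \<Longrightarrow>
      eventually (\<lambda>u. \<bar>scaled_h L r c u\<bar> \<le> B * (2 * e) powr s) at_top"
proof -
  obtain B where B: "B \<ge> 0" "\<And>p. \<bar>h (int_comb L r p)\<bar> \<le> B * (l1_int r p + 1) powr s"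
    using growth_bound by blast
  have bound: "\<bar>scaled_h L r c u\<bar> \<le> B * (2 * e) powr s"
    if e: "e > 0" "l1 r c \<le> e" and u: "u \<ge> max 1 ((r + 1) / e)" for c e u
  proof -
    have u1: "u \<ge> 1" using u by simp
    have "u * l1 r c \<le> u * e" using e u1 by (intro mult_left_mono) auto
    moreover have "real r + 1 \<le> u * e" using e u by (simp add: field_simps)
    moreover have "l1_int r (\<lambda>i. \<lfloor>u * c i\<rfloor>) \<le> u * l1 r c + r"
      using u1 by (intro l1_int_floor_le) simp
    ultimately have "l1_int r (\<lambda>i. \<lfloor>u * c i\<rfloor>) + 1 \<le> 2 * (u * e)" by linarith
    then have "(l1_int r (\<lambda>i. \<lfloor>u * c i\<rfloor>) + 1) powr s \<le> (2 * e * u) powr s"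
      using s_pos l1_int_nonneg[of r "\<lambda>i. \<lfloor>u * c i\<rfloor>"] by (intro powr_mono2) (auto simp: ac_simps)
    then have "\<bar>h (int_comb L r (\<lambda>i. \<lfloor>u * c i\<rfloor>))\<bar> \<le> B * (2 * e * u) powr s"
      using order_trans[OF B(2) mult_left_mono[OF _ B(1)]] by blast
    also have "\<dots> = B * (2 * e) powr s * u powr s" using e u by (simp add: powr_mult)
    finally show ?thesis using u1 by (simp add: scaled_h_def abs_divide pos_divide_le_eq)
  qed
  have "eventually (\<lambda>u. \<bar>scaled_h L r c u\<bar> \<le> B * (2 * e) powr s) at_top"
    if "e > 0" "l1 r c \<le> e" for c e
    using eventually_ge_at_top[of "max 1 ((r + 1) / e)"] by (rule eventually_mono) (rule bound[OF that])
  with B(1) that show ?thesis by blast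
qed

lemma Bfun_scaled_h: "Bfun (scaled_h L r c) at_top"
proof -
  obtain B where B: "\<And>c e. e > 0 \<Longrightarrow> l1 r c \<le> e \<Longrightarrow>
      eventually (\<lambda>u. \<bar>scaled_h L r c u\<bar> \<le> B * (2 * e) powr s) at_top"
    using scaled_h_bound by blast
  have "eventually (\<lambda>u. norm (scaled_h L r c u) \<le> B * (2 * (l1 r c + 1)) powr s) at_top"
    using B[of "l1 r c + 1" c] l1_nonneg[of r c] by simp
  then show ?thesis by (rule BfunI)
qed

lemma hhat_comb_bound: "\<exists>B\<ge>0. \<forall>c. \<bar>hhat_comb L r c\<bar> \<le> B * l1 r c powr s"
proof -
  obtain B where B: "B \<ge> 0" "\<And>c e. e > 0 \<Longrightarrow> l1 r c \<le> e \<Longrightarrow>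
      eventually (\<lambda>u. \<bar>scaled_h L r c u\<bar> \<le> B * (2 * e) powr s) at_top"
    using scaled_h_bound by blast
  have le: "\<bar>hhat_comb L r c\<bar> \<le> B * 2 powr s * e powr s" if "e > 0" "l1 r c \<le> e" for c e
    using real_limsup_bounded(2)[OF B(2)[OF that]] that by (simp add: hhat_comb_def powr_mult)
  have "\<bar>hhat_comb L r c\<bar> \<le> B * 2 powr s * l1 r c powr s" for c
  proof (cases "l1 r c = 0")
    case True
    have "((\<lambda>e. B * 2 powr s * e powr s) \<longlongrightarrow> B * 2 powr s * 0) (at_right 0)"
      using s_pos eventually_at_right_less[of "0::real"]
      by (intro tendsto_mult tendsto_const tendsto_zero_powrI)
        (auto elim: eventually_mono intro: tendsto_ident_at)
    moreover have "eventually (\<lambda>e. \<bar>hhat_comb L r c\<bar> \<le> B * 2 powr s * e powr s) (at_right 0)"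
      using le True eventually_at_right_less[of 0] by (auto elim: eventually_mono)
    ultimately have "\<bar>hhat_comb L r c\<bar> \<le> 0"
      by (intro tendsto_le[OF trivial_limit_at_right_real _ tendsto_const]) simp_all
    then show ?thesis using True by simp
  next
    case False
    then show ?thesis using le[of "l1 r c"] l1_nonneg[of r c] by simp
  qed
  then show ?thesis using B(1) by (intro exI[of _ "B * 2 powr s"]) simp
qed

lemma hhat_comb_scale:
  assumes "t > 0"
  shows "hhat_comb L r (\<lambda>i. t * c i) = t powr s * hhat_comb L r c"
proof -
  have "scaled_h L r (\<lambda>i. t * c i) u = t powr s * scaled_h L r c (t * u)" if "u > 0" for u
    using assms that by (simp add: scaled_h_def powr_mult mult.assoc mult.left_commute)
  then have "hhat_comb L r (\<lambda>i. t * c i) = real_limsup (\<lambda>u. t powr s * scaled_h L r c (t * u))"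
    unfolding hhat_comb_def by (intro real_limsup_cong) (auto intro: eventually_mono[OF eventually_gt_at_top])
  also have "\<dots> = t powr s * real_limsup (\<lambda>u. scaled_h L r c (t * u))"
  proof (rule real_limsup_cmult)
    obtain K where "eventually (\<lambda>u. norm (scaled_h L r c u) \<le> K) at_top"
      using Bfun_scaled_h[of L r c] by (auto simp: Bfun_def)
    then have "eventually (\<lambda>u. norm (scaled_h L r c (t * u)) \<le> K) at_top"
      using filterlim_tendsto_pos_mult_at_top[OF tendsto_const assms filterlim_ident]
      unfolding filterlim_iff by blast
    then show "Bfun (\<lambda>u. scaled_h L r c (t * u)) at_top" by (rule BfunI)
  qed simp
  also have "\<dots> = t powr s * hhat_comb L r c"
    unfolding hhat_comb_def using real_limsup_compose_times[OF assms] by simp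
  finally show ?thesis .
qed

lemma scaled_h_join_0_right: "scaled_h (join m L L') (m + n) (join m c (\<lambda>_. 0)) = scaled_h L m c"
proof -
  have "(\<lambda>i. \<lfloor>u * join m c (\<lambda>_. 0) i\<rfloor>) = join m (\<lambda>i. \<lfloor>u * c i\<rfloor>) (\<lambda>_. 0)" for u
    by (auto simp: join_def)
  then show ?thesis by (simp add: scaled_h_def int_comb_join fun_eq_iff)
qed

lemma scaled_h_join_0_left: "scaled_h (join m L L') (m + n) (join m (\<lambda>_. 0) c') = scaled_h L' n c'"
proof -
  have "(\<lambda>i. \<lfloor>u * join m (\<lambda>_. 0) c' i\<rfloor>) = join m (\<lambda>_. 0) (\<lambda>i. \<lfloor>u * c' i\<rfloor>)" for u
    by (auto simp: join_def)
  then show ?thesis by (simp add: scaled_h_def int_comb_join fun_eq_iff)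
qed

lemma scaled_h_shift_relation:
  assumes z: "int_comb L r z = 0" and b: "b > 0"
  obtains K where "\<And>u. u \<ge> 1 \<Longrightarrow>
    \<bar>scaled_h L r (\<lambda>i. c i + of_int a / of_int b * of_int (z i)) u - scaled_h L r c u\<bar>
      \<le> K * u powr (max (s - 1) 0 - s)"
proof -
  define c' where "c' i = c i + of_int a / of_int b * of_int (z i)" for i
  obtain A where A: "A \<ge> 0"
    and diff: "\<And>m d W. (\<And>q. l1_int r (\<lambda>i. q i - m i) < l1_int r d \<Longrightarrow> (l1_int r q + 1) powr (s - 1) \<le> W) \<Longrightarrow>
      \<bar>h (int_comb L r (\<lambda>i. m i + d i)) - h (int_comb L r m)\<bar> \<le> l1_int r d * (A * W)"
    using lattice_diff_bound by blast
  define D where "D = \<bar>a\<bar> * l1_int r z + r"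
  define E where "E = l1 r c + D + r + 1"
  define \<sigma> where "\<sigma> = max (s - 1) 0"
  have D: "D \<ge> 0" unfolding D_def using l1_int_nonneg[of r z] by simp
  have E: "E \<ge> 1" unfolding E_def using D l1_nonneg[of r c] by simp
  have "\<bar>scaled_h L r c' u - scaled_h L r c u\<bar> \<le> D * A * E powr \<sigma> * u powr (\<sigma> - s)"
    if u: "u \<ge> 1" for u
  proof -
    obtain e where e: "int_comb L r (\<lambda>i. \<lfloor>u * c' i\<rfloor>) = int_comb L r (\<lambda>i. \<lfloor>u * c i\<rfloor> + e i)"
      "l1_int r e \<le> D"
      using int_comb_floor_shift_relation[OF z b, of u c a] u unfolding c'_def D_def by auto
    have "(l1_int r q + 1) powr (s - 1) \<le> (u * E) powr \<sigma>"
      if "l1_int r (\<lambda>i. q i - \<lfloor>u * c i\<rfloor>) < l1_int r e" for q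
    proof -
      have "l1_int r q \<le> u * l1 r c + r + D"
        using l1_int_diff_le[of r q "\<lambda>i. \<lfloor>u * c i\<rfloor>"] l1_int_floor_le[of u r c] that e(2) u
        by linarith
      moreover have "D + r + 1 \<le> u * (D + r + 1)" using u D by simp
      ultimately have "l1_int r q + 1 \<le> u * E" unfolding E_def by (simp add: distrib_left)
      then show ?thesis
        unfolding \<sigma>_def using l1_int_nonneg[of r q] by (intro powr_le_powr_max_0) auto
    qed
    then have "\<bar>h (int_comb L r (\<lambda>i. \<lfloor>u * c' i\<rfloor>)) - h (int_comb L r (\<lambda>i. \<lfloor>u * c i\<rfloor>))\<bar>
        \<le> l1_int r e * (A * (u * E) powr \<sigma>)"
      unfolding e(1) by (rule diff)
    also have "\<dots> \<le> D * (A * (u * E) powr \<sigma>)" using e(2) A by (intro mult_right_mono) auto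
    also have "\<dots> = D * A * E powr \<sigma> * u powr (\<sigma> - s) * u powr s"
      using u E by (simp add: powr_mult powr_diff)
    finally show ?thesis
      using u by (intro abs_scaled_h_diff_le) auto
  qed
  then show ?thesis using that unfolding c'_def \<sigma>_def by blast
qed

lemma hhat_comb_shift_relation:
  assumes "int_comb L r z = 0" and "b > 0"
  shows "hhat_comb L r (\<lambda>i. c i + of_int a / of_int b * of_int (z i)) = hhat_comb L r c"
proof -
  obtain K where "\<And>u. u \<ge> 1 \<Longrightarrow>
      \<bar>scaled_h L r (\<lambda>i. c i + of_int a / of_int b * of_int (z i)) u - scaled_h L r c u\<bar>
        \<le> K * u powr (max (s - 1) 0 - s)"
    using scaled_h_shift_relation[OF assms] by blast
  moreover have "max (s - 1) 0 - s < 0" using s_pos by simp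
  ultimately show ?thesis
    unfolding hhat_comb_def by (rule real_limsup_eq_if_dist_le_powr[OF Bfun_scaled_h Bfun_scaled_h])
qed

lemma hhat_comb_shift_relations:
  assumes "finite T" and "\<And>v. v \<in> T \<Longrightarrow> int_comb L r (z v) = 0" and "b > 0"
  shows "hhat_comb L r (\<lambda>i. c i + (\<Sum>v\<in>T. of_int (a v) / of_int b * of_int (z v i))) = hhat_comb L r c"
  using assms(1,2)
proof (induction T rule: finite_induct)
  case (insert v T)
  have "hhat_comb L r (\<lambda>i. c i + (\<Sum>v\<in>insert v T. of_int (a v) / of_int b * of_int (z v i)))
      = hhat_comb L r (\<lambda>i. (c i + (\<Sum>v\<in>T. of_int (a v) / of_int b * of_int (z v i)))
          + of_int (a v) / of_int b * of_int (z v i))"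
    using insert.hyps by (simp add: algebra_simps)
  also have "\<dots> = hhat_comb L r (\<lambda>i. c i + (\<Sum>v\<in>T. of_int (a v) / of_int b * of_int (z v i)))"
    using insert.prems assms(3) by (intro hhat_comb_shift_relation) auto
  finally show ?case using insert by simp
qed simp

text \<open>Away from \<open>0\<close> every lattice point on the path from \<open>\<lfloor>u c\<rfloor>\<close> to \<open>\<lfloor>u c'\<rfloor>\<close> has norm comparable
  to \<open>u |c|\<close>, so the step bound \<open>(|q| + 1)\<^sup>s\<^sup>-\<^sup>1\<close> is uniform along it, also for \<open>s < 1\<close>.\<close>
lemma scaled_h_lipschitz:
  assumes N: "l1 r c > 0"
  obtains K where "K \<ge> 0"
    and "\<And>c' u. l1 r (\<lambda>i. c' i - c i) \<le> l1 r c / 4 \<Longrightarrow> u \<ge> 1 \<Longrightarrow> 8 * real r + 4 \<le> u * l1 r c \<Longrightarrow>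
      \<bar>scaled_h L r c' u - scaled_h L r c u\<bar> \<le> K * l1 r (\<lambda>i. c' i - c i) + K * r * u powr (-1)"
proof -
  obtain A where A: "A \<ge> 0"
    and diff: "\<And>m d W. (\<And>q. l1_int r (\<lambda>i. q i - m i) < l1_int r d \<Longrightarrow> (l1_int r q + 1) powr (s - 1) \<le> W) \<Longrightarrow>
      \<bar>h (int_comb L r (\<lambda>i. m i + d i)) - h (int_comb L r m)\<bar> \<le> l1_int r d * (A * W)"
    using lattice_diff_bound by blast
  define N where "N = l1 r c"
  define K where "K = A * 2 powr \<bar>s - 1\<bar> * N powr (s - 1)"
  have K: "K \<ge> 0" unfolding K_def using A by simp
  have "\<bar>scaled_h L r c' u - scaled_h L r c u\<bar> \<le> K * \<delta> + K * r * u powr (-1)"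
    if \<delta>: "\<delta> = l1 r (\<lambda>i. c' i - c i)" "\<delta> \<le> N / 4" and u: "u \<ge> 1" "8 * real r + 4 \<le> u * N" for c' u \<delta>
  proof -
    define m where "m = (\<lambda>i. \<lfloor>u * c i\<rfloor>)"
    define d where "d = (\<lambda>i. \<lfloor>u * c' i\<rfloor> - \<lfloor>u * c i\<rfloor>)"
    have d: "l1_int r d \<le> u * \<delta> + r"
      unfolding d_def \<delta> using u by (intro l1_int_floor_diff_le) simp
    have m: "u * N - r \<le> l1_int r m" "l1_int r m \<le> u * N + r"
      unfolding m_def N_def using u by (auto intro: l1_int_floor_ge l1_int_floor_le)
    have "u * \<delta> \<le> u * (N / 4)" using \<delta> u by (intro mult_left_mono) auto
    then have u\<delta>: "4 * (u * \<delta>) \<le> u * N" by simp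
    have "(l1_int r q + 1) powr (s - 1) \<le> 2 powr \<bar>s - 1\<bar> * (u * N) powr (s - 1)"
      if "l1_int r (\<lambda>i. q i - m i) < l1_int r d" for q
    proof (rule powr_le_powr_ratio)
      show "u * N \<le> 2 * (l1_int r q + 1)"
        using l1_int_diff_ge[of r m q] that d m u u\<delta> by argo
      show "l1_int r q + 1 \<le> 2 * (u * N)"
        using l1_int_diff_le[of r q m] that d m u u\<delta> by argo
      show "0 < l1_int r q + 1" "0 < u * N"
        using l1_int_nonneg[of r q] u N by (auto simp: N_def)
    qed simp
    then have "\<bar>h (int_comb L r (\<lambda>i. m i + d i)) - h (int_comb L r m)\<bar>
        \<le> l1_int r d * (A * (2 powr \<bar>s - 1\<bar> * (u * N) powr (s - 1)))"
      by (rule diff)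
    also have "\<dots> = l1_int r d * (K * u powr (s - 1))"
      using u N by (simp add: K_def N_def powr_mult ac_simps)
    also have "\<dots> \<le> (u * \<delta> + r) * (K * u powr (s - 1))"
      using d K by (intro mult_right_mono) auto
    also have "\<dots> = (K * \<delta> + K * r * u powr (-1)) * u powr s"
      using u by (simp add: powr_diff powr_minus field_simps)
    finally show ?thesis
      using u by (intro abs_scaled_h_diff_le) (auto simp: m_def d_def)
  qed
  with K that show ?thesis unfolding N_def by blast
qed

lemma hhat_comb_lipschitz:
  assumes N: "l1 r c > 0"
  shows "\<exists>K\<ge>0. \<forall>c'. l1 r (\<lambda>i. c' i - c i) \<le> l1 r c / 4 \<longrightarrow>
     \<bar>hhat_comb L r c' - hhat_comb L r c\<bar> \<le> K * l1 r (\<lambda>i. c' i - c i)"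
proof -
  obtain K where K: "K \<ge> 0"
    and close: "\<And>c' u. l1 r (\<lambda>i. c' i - c i) \<le> l1 r c / 4 \<Longrightarrow> u \<ge> 1 \<Longrightarrow> 8 * real r + 4 \<le> u * l1 r c \<Longrightarrow>
      \<bar>scaled_h L r c' u - scaled_h L r c u\<bar> \<le> K * l1 r (\<lambda>i. c' i - c i) + K * r * u powr (-1)"
    using scaled_h_lipschitz[OF N] by blast
  have "\<bar>hhat_comb L r c' - hhat_comb L r c\<bar> \<le> K * l1 r (\<lambda>i. c' i - c i)"
    if "l1 r (\<lambda>i. c' i - c i) \<le> l1 r c / 4" for c'
    unfolding hhat_comb_def
  proof (rule real_limsup_dist_le[OF Bfun_scaled_h Bfun_scaled_h])
    fix e :: real assume "e > 0"
    have "eventually (\<lambda>u. K * r * u powr (-1) \<le> e) at_top"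
      using \<open>e > 0\<close> by (intro eventually_mult_powr_le) auto
    from this eventually_ge_at_top[of 1] eventually_ge_at_top[of "(8 * r + 4) / l1 r c"]
    show "eventually (\<lambda>u. \<bar>scaled_h L r c' u - scaled_h L r c u\<bar> \<le> K * l1 r (\<lambda>i. c' i - c i) + e) at_top"
    proof eventually_elim
      case (elim u)
      then have "8 * real r + 4 \<le> u * l1 r c" using N by (simp add: pos_divide_le_eq)
      then have "\<bar>scaled_h L r c' u - scaled_h L r c u\<bar> \<le> K * l1 r (\<lambda>i. c' i - c i) + K * r * u powr (-1)"
        using close[OF that] elim by blast
      then show ?case using elim by linarith
    qed
  qed
  with K show ?thesis by blast
qed

lemma hhat_comb_tendsto_0:
  assumes "(\<lambda>n. l1 r (cs n)) \<longlonglongrightarrow> 0"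
  shows "(\<lambda>n. hhat_comb L r (cs n)) \<longlonglongrightarrow> 0"
proof -
  obtain B where B: "\<And>c. \<bar>hhat_comb L r c\<bar> \<le> B * l1 r c powr s"
    using hhat_comb_bound by blast
  have "eventually (\<lambda>n. norm (hhat_comb L r (cs n)) \<le> B * l1 r (cs n) powr s) sequentially"
    using B by (intro always_eventually allI) simp
  moreover have "(\<lambda>n. B * l1 r (cs n) powr s) \<longlonglongrightarrow> 0"
    using s_pos by (intro tendsto_mult_right_zero tendsto_zero_powrI[OF assms]) (auto simp: l1_nonneg)
  ultimately show ?thesis by (rule Lim_null_comparison)
qed

lemma hhat_comb_continuous:
  assumes lim: "\<And>i. i < r \<Longrightarrow> (\<lambda>n. cs n i) \<longlonglongrightarrow> c i"
  shows "(\<lambda>n. hhat_comb L r (cs n)) \<longlonglongrightarrow> hhat_comb L r c"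
proof -
  define \<delta> where "\<delta> n = l1 r (\<lambda>i. cs n i - c i)" for n
  have "(\<lambda>n. \<Sum>i<r. \<bar>cs n i - c i\<bar>) \<longlonglongrightarrow> (\<Sum>i<r. \<bar>c i - c i\<bar>)"
    using lim by (intro tendsto_intros) auto
  then have \<delta>: "\<delta> \<longlonglongrightarrow> 0" by (simp add: \<delta>_def[abs_def] l1_def)
  show ?thesis
  proof (cases "l1 r c > 0")
    case True
    obtain K where K: "\<And>c'. l1 r (\<lambda>i. c' i - c i) \<le> l1 r c / 4 \<Longrightarrow>
        \<bar>hhat_comb L r c' - hhat_comb L r c\<bar> \<le> K * l1 r (\<lambda>i. c' i - c i)"
      using hhat_comb_lipschitz[OF True] by blast
    have "(\<lambda>n. hhat_comb L r (cs n) - hhat_comb L r c) \<longlonglongrightarrow> 0"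
    proof (rule Lim_null_comparison)
      have "eventually (\<lambda>n. \<delta> n < l1 r c / 4) sequentially"
        using \<delta> True by (intro order_tendstoD(2)) auto
      then show "eventually (\<lambda>n. norm (hhat_comb L r (cs n) - hhat_comb L r c) \<le> K * \<delta> n) sequentially"
        by eventually_elim (use K in \<open>auto simp: \<delta>_def\<close>)
      show "(\<lambda>n. K * \<delta> n) \<longlonglongrightarrow> 0" using tendsto_mult_right_zero[OF \<delta>] .
    qed
    then show ?thesis by (simp add: LIM_zero_iff)
  next
    case False
    then have c0: "\<And>i. i < r \<Longrightarrow> c i = 0" and "l1 r c = 0"
      using l1_nonneg[of r c] l1_eq_0_iff[of r c] by simp_all
    obtain B where "\<bar>hhat_comb L r c\<bar> \<le> B * l1 r c powr s"
      using hhat_comb_bound by blast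
    with \<open>l1 r c = 0\<close> have "hhat_comb L r c = 0" by simp
    moreover have "\<delta> = (\<lambda>n. l1 r (cs n))"
      unfolding \<delta>_def l1_def using c0 by (intro ext sum.cong) auto
    ultimately show ?thesis using \<delta> hhat_comb_tendsto_0[of r cs L] by simp
  qed
qed

end

lemma growth_conditionsI:
  fixes h :: "'p::ab_group_add \<Rightarrow> real"
  assumes s_pos: "s > 0"
    and growth: "\<And>(r::nat) (L::nat \<Rightarrow> 'p). \<exists>C R::real. \<forall>m::nat \<Rightarrow> int.
        R \<le> (\<Sum>i\<in>{1..r}. real_of_int \<bar>m i\<bar>) \<longrightarrow>
        \<bar>h (\<Sum>i\<in>{1..r}. zmul (m i) (L i))\<bar> \<le> C * (\<Sum>i\<in>{1..r}. real_of_int \<bar>m i\<bar>) powr s"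
    and diff: "\<And>(r::nat) (L::nat \<Rightarrow> 'p). \<exists>C R::real. \<forall>m::nat \<Rightarrow> int.
        R \<le> (\<Sum>i\<in>{1..r}. real_of_int \<bar>m i\<bar>) \<longrightarrow>
        \<bar>h (L 0 + (\<Sum>i\<in>{1..r}. zmul (m i) (L i))) - h (\<Sum>i\<in>{1..r}. zmul (m i) (L i))\<bar>
          \<le> C * (\<Sum>i\<in>{1..r}. real_of_int \<bar>m i\<bar>) powr (s - 1)"
  shows "growth_conditions h s"
proof
  have l1_shift: "(\<Sum>i\<in>{1..r}. real_of_int \<bar>p (i - 1)\<bar>) = l1_int r p" for r p
    by (simp add: l1_int_def sum.atLeast1_atMost_eq)
  fix r :: nat and L :: "nat \<Rightarrow> 'p" and y :: 'p
  have comb_shift: "(\<Sum>i\<in>{1..r}. zmul (p (i - 1)) (L (i - 1))) = int_comb L r p"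
    "(\<Sum>i\<in>{1..r}. zmul (p (i - 1)) (if i = 0 then y else L (i - 1))) = int_comb L r p" for p
    by (simp_all add: int_comb_def sum.atLeast1_atMost_eq)
  obtain C R where "\<And>m. R \<le> (\<Sum>i\<in>{1..r}. real_of_int \<bar>m i\<bar>) \<Longrightarrow>
      \<bar>h (\<Sum>i\<in>{1..r}. zmul (m i) (L (i - 1)))\<bar> \<le> C * (\<Sum>i\<in>{1..r}. real_of_int \<bar>m i\<bar>) powr s"
    using growth[of r "\<lambda>i. L (i - 1)"] by blast
  from this[of "\<lambda>i. p (i - 1)" for p]
  show "\<exists>C R. \<forall>p. R \<le> l1_int r p \<longrightarrow> \<bar>h (int_comb L r p)\<bar> \<le> C * l1_int r p powr s"
    unfolding l1_shift comb_shift by auto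
  obtain C R where "\<And>m. R \<le> (\<Sum>i\<in>{1..r}. real_of_int \<bar>m i\<bar>) \<Longrightarrow>
      \<bar>h (y + (\<Sum>i\<in>{1..r}. zmul (m i) (if i = 0 then y else L (i - 1))))
        - h (\<Sum>i\<in>{1..r}. zmul (m i) (if i = 0 then y else L (i - 1)))\<bar>
        \<le> C * (\<Sum>i\<in>{1..r}. real_of_int \<bar>m i\<bar>) powr (s - 1)"
    using diff[of r "\<lambda>i. if i = 0 then y else L (i - 1)"] by auto
  from this[of "\<lambda>i. p (i - 1)" for p]
  show "\<exists>C R. \<forall>p. R \<le> l1_int r p \<longrightarrow>
      \<bar>h (y + int_comb L r p) - h (int_comb L r p)\<bar> \<le> C * l1_int r p powr (s - 1)"
    unfolding l1_shift comb_shift by auto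
qed (fact s_pos)

section \<open>The homogenization on the real tensor product\<close>

locale tensor_growth = growth_conditions h s for h :: "'p::ab_group_add \<Rightarrow> real" and s :: real +
  fixes \<iota> :: "'p \<Rightarrow> 'v::real_vector"
  assumes tensor: "real_tensor \<iota>"
begin

lemma iota_int_comb: "\<iota> (int_comb L r p) = (\<Sum>j<r. of_int (p j) *\<^sub>R \<iota> (L j))"
proof -
  have add: "\<iota> (x + y) = \<iota> x + \<iota> y" for x y
    using tensor by (simp add: real_tensor_def)
  then have "\<iota> 0 = 0" using add[of 0 0] by simp
  then show ?thesis
    unfolding int_comb_def using additive_zmul[of \<iota>, OF add]
    by (induction r) (simp_all add: add)
qed

lemma iota_repr: "\<exists>(r::nat) L c. M = (\<Sum>j<r. c j *\<^sub>R \<iota> (L j))"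
proof -
  have "M \<in> span (range \<iota>)" using tensor by (simp add: real_tensor_def)
  then obtain T u where T: "finite T" "T \<subseteq> range \<iota>" "M = (\<Sum>v\<in>T. u v *\<^sub>R v)"
    unfolding span_explicit by blast
  obtain f where f: "bij_betw f {..<card T} T"
    using ex_bij_betw_nat_finite[OF T(1)] by (auto simp: atLeast0LessThan)
  have "M = (\<Sum>j<card T. u (f j) *\<^sub>R f j)"
    unfolding T(3) by (rule sum.reindex_bij_betw[OF f, symmetric])
  also have "\<dots> = (\<Sum>j<card T. u (f j) *\<^sub>R \<iota> (inv \<iota> (f j)))"
  proof (rule sum.cong)
    fix j assume "j \<in> {..<card T}"
    then have "f j \<in> range \<iota>" using f T(2) by (auto simp: bij_betw_def)
    then show "u (f j) *\<^sub>R f j = u (f j) *\<^sub>R \<iota> (inv \<iota> (f j))" by (simp add: f_inv_into_f)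
  qed simp
  finally show ?thesis by (intro exI)
qed

lemma iota_family_repr:
  fixes M :: "nat \<Rightarrow> 'v" and k :: nat
  shows "\<exists>(r::nat) L a. \<forall>i<k. M i = (\<Sum>j<r. a i j *\<^sub>R \<iota> (L j))"
proof (induction k)
  case (Suc k)
  then obtain m :: nat and L a where IH: "\<forall>i<k. M i = (\<Sum>j<m. a i j *\<^sub>R \<iota> (L j))" by blast
  obtain n :: nat and L' c where Mk: "M k = (\<Sum>j<n. c j *\<^sub>R \<iota> (L' j))" using iota_repr by blast
  define a' where "a' i = (if i < k then join m (a i) (\<lambda>_. 0) else join m (\<lambda>_. 0) c)" for i
  have "M i = (\<Sum>j<m + n. a' i j *\<^sub>R \<iota> (join m L L' j))" if "i < Suc k" for i
    using IH Mk that by (cases "i < k") (simp_all add: a'_def sum_join_scaleR less_Suc_eq)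
  then show ?case by blast
qed simp

text \<open>\<open>c' - c\<close> is a real combination of integer relations; rational approximations of its
  coefficients leave \<open>hhat_comb\<close> unchanged, and continuity passes to the limit.\<close>
lemma hhat_comb_eq_if_sum_eq:
  assumes "(\<Sum>j<r. c j *\<^sub>R \<iota> (L j)) = (\<Sum>j<r. c' j *\<^sub>R \<iota> (L j))"
  shows "hhat_comb L r c = hhat_comb L r c'"
proof -
  let ?Z = "{coeff_vec r (\<lambda>i. of_int (z i)) | z. int_comb L r z = 0}"
  have "(\<Sum>j<r. (c' j - c j) *\<^sub>R \<iota> (L j)) = 0"
    using assms by (simp add: scaleR_diff_left sum_subtractf)
  then have "coeff_vec r (\<lambda>j. c' j - c j) \<in> span ?Z"
    by (rule real_tensor_kernel_in_span_relations[OF tensor])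
  then obtain T w where T: "finite T" "T \<subseteq> ?Z" "coeff_vec r (\<lambda>j. c' j - c j) = (\<Sum>v\<in>T. w v *\<^sub>R v)"
    unfolding span_explicit by blast
  then have "\<forall>v\<in>T. \<exists>z. v = coeff_vec r (\<lambda>i. of_int (z i)) \<and> int_comb L r z = 0" by blast
  then obtain z where z: "\<And>v. v \<in> T \<Longrightarrow> v = coeff_vec r (\<lambda>i. of_int (z v i)) \<and> int_comb L r (z v) = 0"
    by (rule bchoice[elim_format]) blast
  have c': "c' j = c j + (\<Sum>v\<in>T. w v * of_int (z v j))" if "j < r" for j
  proof -
    have "c' j - c j = Poly_Mapping.lookup (\<Sum>v\<in>T. w v *\<^sub>R v) j"
      using that by (simp flip: T(3))
    also have "\<dots> = (\<Sum>v\<in>T. w v * of_int (z v j))"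
    proof (simp add: lookup_sum, rule sum.cong)
      fix v assume "v \<in> T"
      then have "Poly_Mapping.lookup v j = of_int (z v j)"
        using z[of v] that by (metis lookup_coeff_vec)
      then show "w v * Poly_Mapping.lookup v j = w v * of_int (z v j)" by simp
    qed simp
    finally show ?thesis by simp
  qed
  define cs where "cs n i = c i + (\<Sum>v\<in>T. of_int \<lfloor>real (Suc n) * w v\<rfloor> / of_int (int (Suc n)) * of_int (z v i))"
    for n i
  have "hhat_comb L r (cs n) = hhat_comb L r c" for n
    unfolding cs_def[abs_def] using T(1) z by (intro hhat_comb_shift_relations) auto
  moreover have "(\<lambda>n. hhat_comb L r (cs n)) \<longlonglongrightarrow> hhat_comb L r c'"
  proof (rule hhat_comb_continuous)
    fix i assume "i < r"
    have "(\<lambda>n. cs n i) \<longlonglongrightarrow> c i + (\<Sum>v\<in>T. w v * of_int (z v i))"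
      unfolding cs_def using tendsto_floor_mult_div by (intro tendsto_intros) simp_all
    then show "(\<lambda>n. cs n i) \<longlonglongrightarrow> c' i" using c'[OF \<open>i < r\<close>] by simp
  qed
  ultimately have "(\<lambda>n. hhat_comb L r c) \<longlonglongrightarrow> hhat_comb L r c'" by simp
  then show ?thesis using LIMSEQ_unique[OF tendsto_const] by blast
qed

lemma hhat_comb_independent_of_repr:
  assumes "(\<Sum>j<m. c j *\<^sub>R \<iota> (L j)) = (\<Sum>j<n. c' j *\<^sub>R \<iota> (L' j))"
  shows "hhat_comb L m c = hhat_comb L' n c'"
proof -
  have "(\<Sum>j<m + n. join m c (\<lambda>_. 0) j *\<^sub>R \<iota> (join m L L' j))
      = (\<Sum>j<m + n. join m (\<lambda>_. 0) c' j *\<^sub>R \<iota> (join m L L' j))"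
    using assms by (simp add: sum_join_scaleR)
  then have "hhat_comb (join m L L') (m + n) (join m c (\<lambda>_. 0))
      = hhat_comb (join m L L') (m + n) (join m (\<lambda>_. 0) c')"
    by (rule hhat_comb_eq_if_sum_eq)
  then show ?thesis
    by (simp add: hhat_comb_def scaled_h_join_0_left scaled_h_join_0_right)
qed

definition hhat :: "'v \<Rightarrow> real" where
  "hhat M = (SOME y. \<exists>r L c. M = (\<Sum>j<r. c j *\<^sub>R \<iota> (L j)) \<and> y = hhat_comb L r c)"

lemma hhat_sum_iota: "hhat (\<Sum>j<r. c j *\<^sub>R \<iota> (L j)) = hhat_comb L r c"
proof -
  let ?M = "\<Sum>j<r. c j *\<^sub>R \<iota> (L j)"
  have "\<exists>y r' L' c'. ?M = (\<Sum>j<r'. c' j *\<^sub>R \<iota> (L' j)) \<and> y = hhat_comb L' r' c'" by blast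
  from someI_ex[OF this] obtain r' L' c'
    where "?M = (\<Sum>j<r'. c' j *\<^sub>R \<iota> (L' j))" "hhat ?M = hhat_comb L' r' c'"
    unfolding hhat_def by blast
  then show ?thesis using hhat_comb_independent_of_repr by metis
qed

lemma hhat_iota: "ereal (hhat (\<iota> L)) = limsup (\<lambda>m. ereal (h (zmul (int m) L) / real m powr s))"
proof -
  obtain B where B: "\<And>n. \<bar>h (zmul (int n) L) / real n powr s\<bar> \<le> B"
    using multiple_ratio_bounded by blast
  have "hhat (\<iota> L) = hhat_comb (\<lambda>_. L) 1 (\<lambda>_. 1)"
    using hhat_sum_iota[where r=1 and c="\<lambda>_. 1" and L="\<lambda>_. L"] by simp
  also have "\<dots> = real_limsup (\<lambda>u. h (zmul (int (nat \<lfloor>u\<rfloor>)) L) / u powr s)"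
    unfolding hhat_comb_def scaled_h_def int_comb_def
    by (intro real_limsup_cong eventually_mono[OF eventually_ge_at_top[of 0]]) simp
  finally show ?thesis
    using real_limsup_floor_powr[OF s_pos B] by simp
qed

lemma hhat_scale:
  assumes "t \<ge> 0"
  shows "hhat (t *\<^sub>R M) = t powr s * hhat M"
proof -
  obtain r :: nat and L c where M: "M = (\<Sum>j<r. c j *\<^sub>R \<iota> (L j))" using iota_repr by blast
  then have "hhat (t *\<^sub>R M) = hhat_comb L r (\<lambda>j. t * c j)"
    using hhat_sum_iota[where r=r and c="\<lambda>j. t * c j"] by (simp add: scaleR_sum_right)
  moreover have "hhat_comb L r (\<lambda>j. t * c j) = t powr s * hhat_comb L r c"
  proof (cases "t = 0")
    case True
    obtain B where "\<bar>hhat_comb L r (\<lambda>j. t * c j)\<bar> \<le> B * l1 r (\<lambda>j. t * c j) powr s"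
      using hhat_comb_bound by blast
    with True show ?thesis by (simp add: l1_def)
  next
    case False
    with assms show ?thesis by (intro hhat_comb_scale) simp
  qed
  ultimately show ?thesis using hhat_sum_iota M by simp
qed

lemma hhat_fin_dim_continuous: "fin_dim_continuous hhat"
  unfolding fin_dim_continuous_def
proof (intro allI impI)
  fix k and M :: "nat \<Rightarrow> 'v" and t :: "nat \<Rightarrow> real" and T :: "nat \<Rightarrow> nat \<Rightarrow> real"
  assume lim: "\<forall>i<k. (\<lambda>n. T n i) \<longlonglongrightarrow> t i"
  obtain r :: nat and L a where M: "\<forall>i<k. M i = (\<Sum>j<r. a i j *\<^sub>R \<iota> (L j))"
    using iota_family_repr by blast
  have coords: "(\<Sum>i<k. x i *\<^sub>R M i) = (\<Sum>j<r. (\<Sum>i<k. x i * a i j) *\<^sub>R \<iota> (L j))" for x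
  proof -
    have "(\<Sum>i<k. x i *\<^sub>R M i) = (\<Sum>i<k. \<Sum>j<r. (x i * a i j) *\<^sub>R \<iota> (L j))"
      using M by (intro sum.cong) (auto simp: scaleR_sum_right)
    also have "\<dots> = (\<Sum>j<r. (\<Sum>i<k. x i * a i j) *\<^sub>R \<iota> (L j))"
      by (subst sum.swap) (simp add: scaleR_sum_left)
    finally show ?thesis .
  qed
  have "(\<lambda>n. hhat_comb L r (\<lambda>j. \<Sum>i<k. T n i * a i j)) \<longlonglongrightarrow> hhat_comb L r (\<lambda>j. \<Sum>i<k. t i * a i j)"
    using lim by (intro hhat_comb_continuous tendsto_intros) auto
  then show "(\<lambda>n. hhat (\<Sum>i<k. T n i *\<^sub>R M i)) \<longlonglongrightarrow> hhat (\<Sum>i<k. t i *\<^sub>R M i)"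
    unfolding coords hhat_sum_iota .
qed

text \<open>Properties (i) and (ii) fix \<open>H\<close> on the rational points \<open>\<Sum> (p\<^sub>j / n) \<iota>(L\<^sub>j)\<close>, which are dense in every
  finite-dimensional subspace; (iii) does the rest.\<close>
lemma hhat_unique:
  assumes iota: "\<And>L. ereal (H (\<iota> L)) = limsup (\<lambda>m. ereal (h (zmul (int m) L) / real m powr s))"
    and scale: "\<And>t M. t \<ge> 0 \<Longrightarrow> H (t *\<^sub>R M) = t powr s * H M"
    and cont: "fin_dim_continuous H"
  shows "H = hhat"
proof
  fix M
  obtain r :: nat and L c where M: "M = (\<Sum>j<r. c j *\<^sub>R \<iota> (L j))" using iota_repr by blast
  define cs where "cs n j = of_int \<lfloor>real (Suc n) * c j\<rfloor> / real (Suc n)" for n j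
  have lim: "\<And>j. j < r \<Longrightarrow> (\<lambda>n. cs n j) \<longlonglongrightarrow> c j"
    unfolding cs_def by (rule tendsto_floor_mult_div)
  have "H (\<Sum>j<r. cs n j *\<^sub>R \<iota> (L j)) = hhat (\<Sum>j<r. cs n j *\<^sub>R \<iota> (L j))" for n
  proof -
    define x where "x = int_comb L r (\<lambda>j. \<lfloor>real (Suc n) * c j\<rfloor>)"
    have x: "(\<Sum>j<r. cs n j *\<^sub>R \<iota> (L j)) = inverse (real (Suc n)) *\<^sub>R \<iota> x"
      by (simp add: x_def iota_int_comb cs_def scaleR_sum_right divide_inverse_commute)
    have "ereal (H (\<iota> x)) = ereal (hhat (\<iota> x))"
      using iota[of x] hhat_iota[of x] by (rule trans[OF _ sym])
    then have "H (\<iota> x) = hhat (\<iota> x)" by simp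
    then show ?thesis
      unfolding x using scale[of "inverse (real (Suc n))"] hhat_scale[of "inverse (real (Suc n))"] by simp
  qed
  moreover have "(\<lambda>n. H (\<Sum>j<r. cs n j *\<^sub>R \<iota> (L j))) \<longlonglongrightarrow> H M"
    unfolding M using cont[unfolded fin_dim_continuous_def, rule_format, OF lim] .
  moreover have "(\<lambda>n. hhat (\<Sum>j<r. cs n j *\<^sub>R \<iota> (L j))) \<longlonglongrightarrow> hhat M"
    unfolding M using hhat_fin_dim_continuous[unfolded fin_dim_continuous_def, rule_format, OF lim] .
  ultimately show "H M = hhat M" using LIMSEQ_unique by simp
qed

end

theorem theoremA1:
  fixes h :: "'p::ab_group_add \<Rightarrow> real" and s :: real
    and \<iota> :: "'p \<Rightarrow> 'v::real_vector"
  assumes tensor: "real_tensor \<iota>"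
    and s_pos: "s > 0"
    and growth: "\<And>(r::nat) (L::nat \<Rightarrow> 'p). \<exists>C R::real. \<forall>m::nat \<Rightarrow> int.
        R \<le> (\<Sum>i\<in>{1..r}. real_of_int \<bar>m i\<bar>) \<longrightarrow>
        \<bar>h (\<Sum>i\<in>{1..r}. zmul (m i) (L i))\<bar>
          \<le> C * (\<Sum>i\<in>{1..r}. real_of_int \<bar>m i\<bar>) powr s"
    and diff: "\<And>(r::nat) (L::nat \<Rightarrow> 'p). \<exists>C R::real. \<forall>m::nat \<Rightarrow> int.
        R \<le> (\<Sum>i\<in>{1..r}. real_of_int \<bar>m i\<bar>) \<longrightarrow>
        \<bar>h (L 0 + (\<Sum>i\<in>{1..r}. zmul (m i) (L i))) - h (\<Sum>i\<in>{1..r}. zmul (m i) (L i))\<bar>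
          \<le> C * (\<Sum>i\<in>{1..r}. real_of_int \<bar>m i\<bar>) powr (s - 1)"
  shows "\<exists>!H :: 'v \<Rightarrow> real.
           (\<forall>L. ereal (H (\<iota> L)) = limsup (\<lambda>m::nat. ereal (h (zmul (int m) L) / real m powr s))) \<and>
           (\<forall>t M. t \<ge> 0 \<longrightarrow> H (t *\<^sub>R M) = t powr s * H M) \<and>
           fin_dim_continuous H"
proof -
  interpret tensor_growth h s \<iota>
    using growth_conditionsI[OF s_pos growth diff] tensor by (simp add: tensor_growth_def tensor_growth_axioms_def)
  show ?thesis
  proof (rule ex1I[of _ hhat])
    fix H assume "(\<forall>L. ereal (H (\<iota> L)) = limsup (\<lambda>m. ereal (h (zmul (int m) L) / real m powr s))) \<and>
      (\<forall>t M. t \<ge> 0 \<longrightarrow> H (t *\<^sub>R M) = t powr s * H M) \<and> fin_dim_continuous H"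
    then show "H = hhat" by (intro hhat_unique) auto
  qed (simp add: hhat_iota hhat_scale hhat_fin_dim_continuous)
qed

end
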